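(* Assume the setting described in the context. Let $q,r\in\mathbb{N}$ and $Q,R>0$ with $q\in(Q,2Q]$, $r\in(R,2R]$, $r<q$, and let $k,\ell$ be integers with $2^{-k}<\psi(q)\le2^{-k+1}$ and $2^{-\ell}<\psi(r)\le2^{-\ell+1}$. Put $$\Delta=\max\left\{\tfrac{2\psi(q)}{q},\tfrac{2\psi(r)}{r}\right\},\quad \delta=\min\left\{\tfrac{2\psi(q)}{q},\tfrac{2\psi(r)}{r}\right\},\quad D=\Delta\frac{qr}{\gcd(q,r)},$$ $q'=q/\gcd(q,r)$, $r'=r/\gcd(q,r)$, $h=q'-r'$. Let $\bullet=k$ if $\psi(q)/q>\psi(r)/r$ and $\bullet=\ell$ if $\psi(q)/q\le\psi(r)/r$, and let $\widehat D=\max\{D,\,h|\boldsymbol\gamma-\mathbf A_\bullet/B_\bullet|\}$. Then, with absolute implied constants: (1) $\lambda(E_q'\cap E_r')\ll\delta^2\gcd(q,r)^2(D^2+1)\ll\lambda(E_q')\lambda(E_r')+D^{-2}\lambda(E_q')\lambda(E_r')$. (2) If $r\nmid q$ and $B_\bullet\le\max\{2^\bullet D,2^{\sigma\bullet}\}$, then $$\lambda(E_q'\cap E_r')\ll\lambda(E_q')\lambda(E_r')+\frac{1}{D^2}\lambda(E_q')\lambda(E_r')\,\mathbb 1[\|h\boldsymbol\gamma\|<D]\left(\mathbb 1[2\widehat D\ge 1/B_\bullet]\,\mathbb 1[B_\bullet\le2^{\sigma\bullet}]+\mathbb 1[2^{\sigma\bullet}<B_\bullet]\right).$$ (3) If $r\nmid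 q$ and $B_\bullet>\max\{2^\bullet D,2^{\sigma\bullet}\}$, then $$\lambda(E_q'\cap E_r')\ll\lambda(E_q')\lambda(E_r')+\frac{1}{D^2}\lambda(E_q')\lambda(E_r')\,\mathbb 1[\|h\boldsymbol\gamma\|<D]\left(\mathbb 1[2D\ge1/b_\bullet]\,\mathbb 1[h\|b_\bullet\boldsymbol\gamma\|\le1/2]+\mathbb 1[h\|b_\bullet\boldsymbol\gamma\|>1/2]\right).$$
   Context: Notation: $|\cdot|$ is the maximum norm on $\mathbb{R}^2$; $\|\mathbf x\|$ is the max-norm distance from $\mathbf x\in\mathbb{R}^2$ to $\mathbb{Z}^2$; $\lambda$ is Lebesgue measure on $\mathbb{R}^2$; $\mathbb 1[\cdot]$ is the indicator of a condition; for an integer vector $\mathbf x=(x_1,x_2)$ and integer $n$, $\gcd(\mathbf x,n)=\gcd(x_1,x_2,n)$. Shift reduction: Fix $\boldsymbol\gamma\in\mathbb{R}^2\setminus\mathbb{Q}^2$ and $\sigma\in(0,1)$. For $k\ge0$ let $B_k\ge1$ be the smallest integer for which there exists $\mathbf A_k\in\mathbb{Z}^2$ with $|\boldsymbol\gamma-\mathbf A_k/B_k|<2^{-k}$, and fix such an $\mathbf A_k$. When $B_k\ge2$, let $1\le b_k<B_k$ be minimal such that there exists $\mathbf a_k\in\mathbb{Z}^2$ with $|\boldsymbol\gamma-\mathbf a_k/b_k|\le1/(b_kB_k^{1/2})$, and fix such an $\mathbf a_k$. Let $K_0$ be such that $B_k\ge2$ for all $k\ge K_0$. Let $\psi:\mathbb{N}\to[0,1/2]$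 satisfy $\psi(q)<2^{-K_0+1}$ for all $q$. For $q$ with $\psi(q)>0$, let $k$ be the integer with $2^{-k}<\psi(q)\le2^{-k+1}$ and set $$S_q=\begin{cases}\{\mathbf u\in(\mathbb{Z}/q\mathbb{Z})^2:\gcd(B_k\mathbf u+\mathbf A_k,B_kq)=1\}&\text{if }B_k\le 2^{\sigma k},\\ \{\mathbf u\in(\mathbb{Z}/q\mathbb{Z})^2:\gcd(b_k\mathbf u+\mathbf a_k,b_kq)=1\}&\text{if }B_k>2^{\sigma k},\end{cases}$$ $$E_q'=\{\boldsymbol\alpha\in[0,1]^2:|q\boldsymbol\alpha-\mathbf u-\boldsymbol\gamma|<\psi(q)\text{ for some }\mathbf u\in\mathbb{Z}^2\text{ with class mod }q\text{ in }S_q\}.$$ *)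

theory Defs
  imports "HOL-Analysis.Analysis"
begin

definition mnorm :: "real \<times> real \<Rightarrow> real" where
  "mnorm x = max \<bar>fst x\<bar> \<bar>snd x\<bar>"

definition distZ :: "real \<Rightarrow> real" where
  "distZ t = min (frac t) (1 - frac t)"

definition distZ2 :: "real \<times> real \<Rightarrow> real" where
  "distZ2 x = max (distZ (fst x)) (distZ (snd x))"

definition ratpt :: "int \<times> int \<Rightarrow> nat \<Rightarrow> real \<times> real" where
  "ratpt a n = (of_int (fst a) / real n, of_int (snd a) / real n)"

definition ivec :: "int \<times> int \<Rightarrow> real \<times> real" where
  "ivec u = (of_int (fst u), of_int (snd u))"

definition Bk :: "real \<times> real \<Rightarrow> nat \<Rightarrow> nat" where
  "Bk \<gamma> k = (LEAST B::nat. 1 \<le> B \<and> (\<exists>A. mnorm (\<gamma> - ratpt A B) < 2 powr (- real k)))"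

definition bk :: "real \<times> real \<Rightarrow> nat \<Rightarrow> nat" where
  "bk \<gamma> k = (LEAST b::nat. 1 \<le> b \<and> b < Bk \<gamma> k \<and>
      (\<exists>a. mnorm (\<gamma> - ratpt a b) \<le> 1 / (real b * sqrt (real (Bk \<gamma> k)))))"

definition gcd3 :: "int \<times> int \<Rightarrow> int \<Rightarrow> int" where
  "gcd3 x n = gcd (gcd (fst x) (snd x)) n"

definition setting :: "real \<times> real \<Rightarrow> real \<Rightarrow> (nat \<Rightarrow> int \<times> int) \<Rightarrow> (nat \<Rightarrow> int \<times> int)
    \<Rightarrow> nat \<Rightarrow> (nat \<Rightarrow> real) \<Rightarrow> bool" where
  "setting \<gamma> \<sigma> A a K0 \<psi> \<longleftrightarrow>
     \<not> (fst \<gamma> \<in> \<rat> \<and> snd \<gamma> \<in> \<rat>) \<and> 0 < \<sigma> \<and> \<sigma> < 1 \<and>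
     (\<forall>k. mnorm (\<gamma> - ratpt (A k) (Bk \<gamma> k)) < 2 powr (- real k)) \<and>
     (\<forall>k. 2 \<le> Bk \<gamma> k \<longrightarrow>
        mnorm (\<gamma> - ratpt (a k) (bk \<gamma> k)) \<le> 1 / (real (bk \<gamma> k) * sqrt (real (Bk \<gamma> k)))) \<and>
     (\<forall>k\<ge>K0. 2 \<le> Bk \<gamma> k) \<and>
     (\<forall>q. 0 \<le> \<psi> q \<and> \<psi> q \<le> 1/2 \<and> \<psi> q < 2 powr (1 - real K0))"

text \<open>The index k with 2^(-k) < psi(q) \<le> 2^(-k+1) (necessarily k \<ge> 2 since psi \<le> 1/2).\<close>
definition kidx :: "(nat \<Rightarrow> real) \<Rightarrow> nat \<Rightarrow> nat" where
  "kidx \<psi> q = (THE k::nat. 2 powr (- real k) < \<psi> q \<and> \<psi> q \<le> 2 powr (1 - real k))"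

text \<open>S_q, as a set of representatives in {0..<q}^2 of (Z/qZ)^2.\<close>
definition Sq :: "real \<times> real \<Rightarrow> real \<Rightarrow> (nat \<Rightarrow> int \<times> int) \<Rightarrow> (nat \<Rightarrow> int \<times> int)
    \<Rightarrow> (nat \<Rightarrow> real) \<Rightarrow> nat \<Rightarrow> (int \<times> int) set" where
  "Sq \<gamma> \<sigma> A a \<psi> q =
    (let k = kidx \<psi> q; B = Bk \<gamma> k; b = bk \<gamma> k in
     if real B \<le> 2 powr (\<sigma> * real k) then
       {u \<in> {0..<int q} \<times> {0..<int q}.
          gcd3 (int B * fst u + fst (A k), int B * snd u + snd (A k)) (int B * int q) = 1}
     else
       {u \<in> {0..<int q} \<times> {0..<int q}.
          gcd3 (int b * fst u + fst (a k), int b * snd u + snd (a k)) (int b * int q) = 1})"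

definition Eq' :: "real \<times> real \<Rightarrow> real \<Rightarrow> (nat \<Rightarrow> int \<times> int) \<Rightarrow> (nat \<Rightarrow> int \<times> int)
    \<Rightarrow> (nat \<Rightarrow> real) \<Rightarrow> nat \<Rightarrow> (real \<times> real) set" where
  "Eq' \<gamma> \<sigma> A a \<psi> q =
    {\<alpha>. 0 \<le> fst \<alpha> \<and> fst \<alpha> \<le> 1 \<and> 0 \<le> snd \<alpha> \<and> snd \<alpha> \<le> 1 \<and> 0 < \<psi> q \<and>
       (\<exists>u::int \<times> int. (fst u mod int q, snd u mod int q) \<in> Sq \<gamma> \<sigma> A a \<psi> q \<and>
          mnorm (real q *\<^sub>R \<alpha> - ivec u - \<gamma>) < \<psi> q)}"

end

theory Submission
  imports Defs
begin

text \<open>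
  Upper bound: a point \<open>\<alpha>\<close> of \<open>E'_q \<inter> E'_r\<close> comes with integer vectors \<open>u, v\<close> such that
  \<open>|q\<alpha> - u - \<gamma>| < \<psi>(q)\<close> and \<open>|r\<alpha> - v - \<gamma>| < \<psi>(r)\<close>; eliminating \<open>\<alpha>\<close>, the integer vector
  \<open>w = r'u - q'v\<close> satisfies \<open>|w - h\<gamma>| < D\<close>. Counting the admissible pairs \<open>(u, v)\<close> in each
  coordinate covers the intersection by \<open>O(g\<^sup>2 (D + 1)\<^sup>2)\<close> squares of side \<open>\<delta>\<close>.

  Lower bound: because \<open>A_k/B_k\<close> and \<open>a_k/b_k\<close> are in lowest terms, a sieve over the primes
  dividing \<open>q\<close> (with \<open>\<Sum> p\<^sup>-\<^sup>2 \<le> 3/4\<close>) leaves at least \<open>q\<^sup>2/4\<close> residues in \<open>S_q\<close>, so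
  \<open>\<lambda>(E'_q) \<ge> \<psi>(q)\<^sup>2/4\<close>; since \<open>\<delta> g D = 4 \<psi>(q) \<psi>(r)\<close> this gives (1).

  For (2) and (3): if \<open>distZ2 (h\<gamma>) \<ge> D\<close> no such \<open>w\<close> exists. Otherwise, whenever the indicator vanishes,
  \<open>A_\<bullet>/B_\<bullet>\<close> (resp. \<open>a_\<bullet>/b_\<bullet>\<close>) approximates \<open>\<gamma>\<close> so well that \<open>B w = h A\<close> for every admissible
  \<open>w\<close>; then \<open>q' | B u + A\<close> and \<open>r' | B v + A\<close>, contradicting the gcd condition defining \<open>S_q\<close>
  or \<open>S_r\<close>, since \<open>q', r' \<ge> 2\<close> when \<open>r\<close> does not divide \<open>q\<close>. The existence of \<open>b_k\<close> is simultaneous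
  Dirichlet approximation, proved by packing squares.
\<close>

lemma mem_square_box:
  fixes p :: "real \<times> real"
  shows "x \<in> box p (p + (t, t)) \<longleftrightarrow>
    fst p < fst x \<and> fst x < fst p + t \<and> snd p < snd x \<and> snd x < snd p + t"
  by (cases p; cases x) (auto simp: mem_box Basis_prod_def)

lemma mem_square_cbox:
  fixes p :: "real \<times> real"
  shows "x \<in> cbox p (p + (t, t)) \<longleftrightarrow>
    fst p \<le> fst x \<and> fst x \<le> fst p + t \<and> snd p \<le> snd x \<and> snd x \<le> snd p + t"
  by (cases p; cases x) (auto simp: mem_box Basis_prod_def)

lemma measure_square_box:
  fixes p :: "real \<times> real"
  assumes "0 \<le> t"
  shows "measure lebesgue (box p (p + (t, t))) = t\<^sup>2"
proof -
  have "measure lebesgue (box p (p + (t, t))) = measure lborel (box p (p + (t, t)))"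
    by simp
  also have "\<dots> = t\<^sup>2"
    using assms by (cases p) (simp add: measure_lborel_box_eq Basis_prod_def power2_eq_square)
  finally show ?thesis .
qed

lemma measure_square_cbox:
  fixes p :: "real \<times> real"
  assumes "0 \<le> t"
  shows "measure lebesgue (cbox p (p + (t, t))) = t\<^sup>2"
  using assms by (cases p) (simp add: content_Pair power2_eq_square)

lemma disjoint_family_card_mult_measure_le:
  fixes S :: "'i \<Rightarrow> 'a::euclidean_space set"
  assumes "finite I" and "disjoint_family_on S I"
    and "\<And>i. i \<in> I \<Longrightarrow> S i \<in> lmeasurable" and "\<And>i. i \<in> I \<Longrightarrow> measure lebesgue (S i) = m"
    and "\<And>i. i \<in> I \<Longrightarrow> S i \<subseteq> T" and "T \<in> lmeasurable"
  shows "real (card I) * m \<le> measure lebesgue T"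
proof -
  have "measure lebesgue (\<Union>i\<in>I. S i) = (\<Sum>i\<in>I. measure lebesgue (S i))"
    using assms(1-3) by (intro measure_UNION') (auto simp: disjoint_family_on_def pairwise_def disjnt_def)
  then have "real (card I) * m = measure lebesgue (\<Union>i\<in>I. S i)"
    using assms(4) by simp
  also have "\<dots> \<le> measure lebesgue T"
    using assms(1,3,5,6) by (intro measure_mono_fmeasurable) auto
  finally show ?thesis .
qed

lemma int_eq_if_abs_diff_less_1:
  "\<bar>of_int k - of_int l\<bar> < (1::real) \<Longrightarrow> k = l"
  by linarith

lemma distZ_le_abs_diff: "distZ t \<le> \<bar>t - of_int n\<bar>"
proof (cases "n \<le> \<lfloor>t\<rfloor>")
  case True
  then have "frac t \<le> \<bar>t - of_int n\<bar>"
    unfolding frac_def by (smt (verit) of_int_floor_le of_int_le_iff)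
  then show ?thesis unfolding distZ_def by linarith
next
  case False
  then have "of_int \<lfloor>t\<rfloor> + 1 \<le> (of_int n :: real)"
    by linarith
  then have "1 - frac t \<le> \<bar>t - of_int n\<bar>"
    unfolding frac_def by linarith
  then show ?thesis unfolding distZ_def by linarith
qed

lemma distZ_attained: "\<exists>n. distZ t = \<bar>t - of_int n\<bar>"
proof -
  have "frac t = \<bar>t - of_int \<lfloor>t\<rfloor>\<bar>" "1 - frac t = \<bar>t - of_int (\<lfloor>t\<rfloor> + 1)\<bar>"
    by (simp_all add: frac_def frac_lt_1[of t, unfolded frac_def])
  then show ?thesis unfolding distZ_def min_def by metis
qed

lemma mnorm_minus_ivec: "mnorm (x - ivec m) = max \<bar>fst x - of_int (fst m)\<bar> \<bar>snd x - of_int (snd m)\<bar>"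
  by (simp add: mnorm_def ivec_def)

lemma mnorm_less_iff: "mnorm x < t \<longleftrightarrow> \<bar>fst x\<bar> < t \<and> \<bar>snd x\<bar> < t"
  by (simp add: mnorm_def)

lemma mnorm_minus_commute: "mnorm (x - y) = mnorm (y - x)"
  by (simp add: mnorm_def abs_minus_commute)

lemma mnorm_scaleR: "mnorm (a *\<^sub>R x) = \<bar>a\<bar> * mnorm x"
  by (simp add: mnorm_def abs_mult max_mult_distrib_left)

lemma mnorm_uminus: "mnorm (- x) = mnorm x"
  by (simp add: mnorm_def)

lemma mnorm_triangle: "mnorm (x + y) \<le> mnorm x + mnorm y"
proof -
  have "\<bar>fst x\<bar> \<le> mnorm x" "\<bar>snd x\<bar> \<le> mnorm x" "\<bar>fst y\<bar> \<le> mnorm y" "\<bar>snd y\<bar> \<le> mnorm y"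
    by (simp_all add: mnorm_def)
  moreover have "\<bar>fst x + fst y\<bar> \<le> \<bar>fst x\<bar> + \<bar>fst y\<bar>" "\<bar>snd x + snd y\<bar> \<le> \<bar>snd x\<bar> + \<bar>snd y\<bar>"
    by (rule abs_triangle_ineq)+
  ultimately show ?thesis
    unfolding mnorm_def[of "x + y"] by auto
qed

lemma ivec_eq_if_mnorm_less_1: "mnorm (ivec u - ivec v) < 1 \<Longrightarrow> u = v"
  by (auto simp: mnorm_less_iff ivec_def prod_eq_iff intro: int_eq_if_abs_diff_less_1)

lemma distZ2_le_mnorm: "distZ2 x \<le> mnorm (x - ivec m)"
  unfolding distZ2_def mnorm_minus_ivec using distZ_le_abs_diff by (meson max.mono)

lemma distZ2_attained: "\<exists>m. distZ2 x = mnorm (x - ivec m)"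
proof -
  obtain n1 n2 where "distZ (fst x) = \<bar>fst x - of_int n1\<bar>" "distZ (snd x) = \<bar>snd x - of_int n2\<bar>"
    using distZ_attained by metis
  then have "distZ2 x = mnorm (x - ivec (n1, n2))"
    by (simp add: distZ2_def mnorm_minus_ivec)
  then show ?thesis ..
qed

lemma distZ2_eq_mnorm:
  assumes "mnorm (x - ivec m) < 1/2"
  shows "distZ2 x = mnorm (x - ivec m)"
proof -
  obtain m0 where m0: "distZ2 x = mnorm (x - ivec m0)"
    using distZ2_attained by blast
  have "\<bar>fst x - of_int (fst m0)\<bar> < 1/2" "\<bar>snd x - of_int (snd m0)\<bar> < 1/2"
       "\<bar>fst x - of_int (fst m)\<bar> < 1/2" "\<bar>snd x - of_int (snd m)\<bar> < 1/2"
    using m0 distZ2_le_mnorm[of x m] assms unfolding mnorm_minus_ivec by linarith+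
  then have "fst m = fst m0" "snd m = snd m0"
    by (intro int_eq_if_abs_diff_less_1; linarith)+
  then have "m = m0"
    by (simp add: prod_eq_iff)
  then show ?thesis using m0 by simp
qed

lemma mnorm_ratpt:
  assumes "0 < b"
  shows "mnorm (\<gamma> - ratpt a b) = mnorm (real b *\<^sub>R \<gamma> - ivec a) / real b"
proof -
  have "\<bar>x - of_int n / real b\<bar> = \<bar>real b * x - of_int n\<bar> / real b" for x n
    using assms by (simp add: field_simps abs_divide[symmetric])
  then show ?thesis
    using assms by (simp add: mnorm_def ratpt_def ivec_def max_divide_distrib_right)
qed

section \<open>Simultaneous Dirichlet approximation\<close>

lemma finite_uniform_margin:
  fixes f :: "'a \<Rightarrow> real"
  assumes "finite C" "\<And>c. c \<in> C \<Longrightarrow> s < f c" "0 < e"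
  obtains \<eta> where "0 < \<eta>" "\<eta> \<le> e" "\<And>c. c \<in> C \<Longrightarrow> s + \<eta> \<le> f c"
proof
  define \<eta> where "\<eta> = Min (insert e ((\<lambda>c. f c - s) ` C))"
  show "0 < \<eta>"
    unfolding \<eta>_def using assms by (auto simp: Min_gr_iff)
  show "\<eta> \<le> e"
    unfolding \<eta>_def using assms(1) by (intro Min_le) auto
  show "s + \<eta> \<le> f c" if "c \<in> C" for c
  proof -
    have "\<eta> \<le> f c - s"
      unfolding \<eta>_def using assms(1) that by (intro Min_le) auto
    then show ?thesis
      by simp
  qed
qed

lemma exists_nat_square_ratio_gap:
  fixes x :: real
  assumes "1 < x"
  obtains N :: nat where "1 \<le> N" "(real N + 1)\<^sup>2 < x * (real N)\<^sup>2"
proof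
  define \<epsilon> where "\<epsilon> = x - 1"
  define N where "N = nat \<lceil>3 / \<epsilon>\<rceil> + 1"
  have "0 < \<epsilon>"
    using assms by (simp add: \<epsilon>_def)
  then have "3 \<le> \<epsilon> * of_int \<lceil>3 / \<epsilon>\<rceil>"
    using le_of_int_ceiling[of "3 / \<epsilon>"] by (simp only: pos_divide_le_eq mult.commute)
  moreover have "0 \<le> \<lceil>3 / \<epsilon>\<rceil>"
    using \<open>0 < \<epsilon>\<close> unfolding zero_le_ceiling by (smt (verit) divide_pos_pos)
  ultimately have "3 < \<epsilon> * real N"
    using \<open>0 < \<epsilon>\<close> by (simp add: N_def algebra_simps)
  moreover have "0 < real N"
    by (simp add: N_def)
  ultimately have "3 * real N < \<epsilon> * (real N)\<^sup>2"
    using mult_strict_right_mono by (fastforce simp: power2_eq_square mult.assoc)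
  then show "(real N + 1)\<^sup>2 < x * (real N)\<^sup>2"
    by (simp add: \<epsilon>_def N_def power2_eq_square algebra_simps)
qed simp

definition lifted_multiple :: "real \<times> real \<Rightarrow> nat \<Rightarrow> int \<times> int \<Rightarrow> real \<times> real" where
  "lifted_multiple \<gamma> b n =
     (frac (real b * fst \<gamma>) + of_int (fst n), frac (real b * snd \<gamma>) + of_int (snd n))"

lemma lifted_multiples_separated:
  assumes t: "t < 1" and sep: "\<And>c. c \<in> {1..<B} \<Longrightarrow> t \<le> distZ2 (real c *\<^sub>R \<gamma>)"
    and b: "b < B" "b' < B" and close: "mnorm (lifted_multiple \<gamma> b n - lifted_multiple \<gamma> b' n') < t"
  shows "b = b' \<and> n = n'"
proof -
  have far: "t \<le> mnorm (lifted_multiple \<gamma> b n - lifted_multiple \<gamma> b' n')"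
    if "b' < b" "b < B" for b b' n n'
  proof -
    define k where "k = (\<lfloor>real b * fst \<gamma>\<rfloor> - \<lfloor>real b' * fst \<gamma>\<rfloor> - fst n + fst n',
                         \<lfloor>real b * snd \<gamma>\<rfloor> - \<lfloor>real b' * snd \<gamma>\<rfloor> - snd n + snd n')"
    have eq: "lifted_multiple \<gamma> b n - lifted_multiple \<gamma> b' n' = real (b - b') *\<^sub>R \<gamma> - ivec k"
      using that by (simp add: lifted_multiple_def k_def ivec_def frac_def of_nat_diff prod_eq_iff algebra_simps)
    have "b - b' \<in> {1..<B}"
      using that by auto
    then have "t \<le> distZ2 (real (b - b') *\<^sub>R \<gamma>)"
      by (rule sep)
    then show ?thesis
      unfolding eq using distZ2_le_mnorm[of "real (b - b') *\<^sub>R \<gamma>" k] by linarith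
  qed
  show ?thesis
  proof (cases b b' rule: linorder_cases)
    case equal
    then have "\<bar>of_int (fst n) - of_int (fst n')\<bar> < (1::real)" "\<bar>of_int (snd n) - of_int (snd n')\<bar> < (1::real)"
      using close t by (auto simp: lifted_multiple_def mnorm_less_iff)
    then show ?thesis
      using equal by (auto simp: prod_eq_iff dest: int_eq_if_abs_diff_less_1)
  next
    case less
    then have "t \<le> mnorm (lifted_multiple \<gamma> b' n' - lifted_multiple \<gamma> b n)"
      using b by (intro far)
    then show ?thesis
      using close by (simp add: mnorm_minus_commute)
  next
    case greater
    then have "t \<le> mnorm (lifted_multiple \<gamma> b n - lifted_multiple \<gamma> b' n')"
      using b by (intro far)
    then show ?thesis
      using close by simp
  qed
qed

lemma lifted_multiples_packing:
  fixes \<gamma> :: "real \<times> real" and B N :: nat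
  assumes t: "0 < t" "t < 1" and sep: "\<And>c. c \<in> {1..<B} \<Longrightarrow> t \<le> distZ2 (real c *\<^sub>R \<gamma>)"
  shows "real B * t\<^sup>2 * (real N)\<^sup>2 \<le> (real N + 1)\<^sup>2"
proof -
  define I where "I = {0..<B} \<times> ({0..<int N} \<times> {0..<int N})"
  define Sqr where "Sqr i = box (lifted_multiple \<gamma> (fst i) (snd i)) (lifted_multiple \<gamma> (fst i) (snd i) + (t, t))"
    for i
  have "real (card I) * t\<^sup>2 \<le> measure lebesgue (cbox (0, 0) ((0, 0) + (real N + 1, real N + 1)))"
  proof (rule disjoint_family_card_mult_measure_le)
    show "disjoint_family_on Sqr I"
    proof (unfold disjoint_family_on_def, intro ballI impI)
      fix i j assume ij: "i \<in> I" "j \<in> I" "i \<noteq> j"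
      show "Sqr i \<inter> Sqr j = {}"
      proof (rule ccontr)
        assume "Sqr i \<inter> Sqr j \<noteq> {}"
        then obtain y where "y \<in> Sqr i" "y \<in> Sqr j"
          by blast
        then have close: "mnorm (lifted_multiple \<gamma> (fst i) (snd i) - lifted_multiple \<gamma> (fst j) (snd j)) < t"
          unfolding Sqr_def mem_square_box mnorm_less_iff by auto
        have "fst i = fst j \<and> snd i = snd j"
          using ij by (intro lifted_multiples_separated[OF t(2) sep _ _ close]) (auto simp: I_def)
        then show False
          using ij(3) by (simp add: prod_eq_iff)
      qed
    qed
    show "Sqr i \<subseteq> cbox (0, 0) ((0, 0) + (real N + 1, real N + 1))" if "i \<in> I" for i
    proof -
      have "0 \<le> fst (snd i)" "fst (snd i) + 1 \<le> int N" "0 \<le> snd (snd i)" "snd (snd i) + 1 \<le> int N"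
        using that by (auto simp: I_def)
      then have n: "0 \<le> real_of_int (fst (snd i))" "real_of_int (fst (snd i)) + 1 \<le> real N"
        "0 \<le> real_of_int (snd (snd i))" "real_of_int (snd (snd i)) + 1 \<le> real N"
        by linarith+
      have f: "0 \<le> frac (real (fst i) * fst \<gamma>)" "frac (real (fst i) * fst \<gamma>) < 1"
        "0 \<le> frac (real (fst i) * snd \<gamma>)" "frac (real (fst i) * snd \<gamma>) < 1"
        by (simp_all add: frac_lt_1)
      show ?thesis
        using n f t
        unfolding Sqr_def lifted_multiple_def subset_iff mem_square_box mem_square_cbox fst_conv snd_conv
        by (intro allI impI) linarith
    qed
    show "measure lebesgue (Sqr i) = t\<^sup>2" for i
      unfolding Sqr_def using t by (intro measure_square_box) simp
  qed (auto simp: I_def Sqr_def)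
  moreover have "measure lebesgue (cbox (0, 0) ((0, 0) + (real N + 1, real N + 1))) = (real N + 1)\<^sup>2"
    by (rule measure_square_cbox) simp
  moreover have "card I = B * N * N"
    by (simp add: I_def card_cartesian_product)
  ultimately show ?thesis
    by (simp add: power2_eq_square algebra_simps)
qed

lemma simultaneous_dirichlet:
  fixes \<gamma> :: "real \<times> real"
  assumes B: "2 \<le> B"
  shows "\<exists>c. 1 \<le> c \<and> c < B \<and> distZ2 (real c *\<^sub>R \<gamma>) \<le> 1 / sqrt (real B)"
proof (rule ccontr)
  define s where "s = 1 / sqrt (real B)"
  assume "\<not> ?thesis"
  then have far: "s < distZ2 (real c *\<^sub>R \<gamma>)" if "c \<in> {1..<B}" for c
    using that by (auto simp: s_def not_le)
  \<comment> \<open>The margin \<open>\<eta>\<close> keeps the squares of side \<open>s + \<eta>\<close> at the lifted multiples disjoint,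
    although their total area per unit cell, \<open>B (s + \<eta>)\<^sup>2\<close>, exceeds 1.\<close>
  obtain \<eta> where \<eta>: "0 < \<eta>" "\<eta> \<le> 1/4" "\<And>c. c \<in> {1..<B} \<Longrightarrow> s + \<eta> \<le> distZ2 (real c *\<^sub>R \<gamma>)"
    using finite_uniform_margin[of "{1..<B}" s "\<lambda>c. distZ2 (real c *\<^sub>R \<gamma>)" "1/4"] far by auto
  have "(4/3)\<^sup>2 < real B"
    using B by (simp add: power2_eq_square)
  then have "s < 3/4"
    using real_less_rsqrt by (fastforce simp: s_def divide_less_eq)
  moreover have s: "0 < s" "real B * s\<^sup>2 = 1"
    using B by (simp_all add: s_def power_divide)
  ultimately have t: "0 < s + \<eta>" "s + \<eta> < 1"
    using \<eta> by simp_all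
  have "real B * s\<^sup>2 < real B * (s + \<eta>)\<^sup>2"
    using s \<eta> B by (intro mult_strict_left_mono power_strict_mono) simp_all
  then obtain N :: nat where "(real N + 1)\<^sup>2 < real B * (s + \<eta>)\<^sup>2 * (real N)\<^sup>2"
    using s(2) exists_nat_square_ratio_gap by (metis mult.assoc)
  moreover have "real B * (s + \<eta>)\<^sup>2 * (real N)\<^sup>2 \<le> (real N + 1)\<^sup>2"
    using t \<eta>(3) by (rule lifted_multiples_packing)
  ultimately show False
    by linarith
qed

section \<open>The approximations \<open>A_k/B_k\<close> and \<open>a_k/b_k\<close>\<close>

lemma two_powr_minus: "(2::real) powr (- real k) = 1 / 2 ^ k"
  by (simp add: powr_minus powr_realpow divide_inverse)

lemma Bk_spec: "1 \<le> Bk \<gamma> k \<and> (\<exists>A. mnorm (\<gamma> - ratpt A (Bk \<gamma> k)) < 2 powr (- real k))"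
  unfolding Bk_def
proof (rule LeastI_ex)
  define B :: nat where "B = 2 ^ k"
  define A where "A = (round (real B * fst \<gamma>), round (real B * snd \<gamma>))"
  have "mnorm (real B *\<^sub>R \<gamma> - ivec A) \<le> 1/2"
    using of_int_round_abs_le[of "real B * fst \<gamma>"] of_int_round_abs_le[of "real B * snd \<gamma>"]
    by (simp add: A_def mnorm_minus_ivec abs_minus_commute)
  then have "mnorm (\<gamma> - ratpt A B) < 2 powr (- real k)"
    by (simp add: mnorm_ratpt B_def two_powr_minus divide_simps)
  then show "\<exists>B. 1 \<le> B \<and> (\<exists>A. mnorm (\<gamma> - ratpt A B) < 2 powr (- real k))"
    by (metis B_def one_le_numeral one_le_power)
qed

lemma Bk_minimal:
  assumes "1 \<le> B" "B < Bk \<gamma> k"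
  shows "2 powr (- real k) \<le> mnorm (\<gamma> - ratpt A B)"
  using not_less_Least[OF assms(2)[unfolded Bk_def]] assms(1) not_less by blast

lemma bk_spec:
  assumes "2 \<le> Bk \<gamma> k"
  shows "1 \<le> bk \<gamma> k \<and> bk \<gamma> k < Bk \<gamma> k \<and>
    (\<exists>a. mnorm (\<gamma> - ratpt a (bk \<gamma> k)) \<le> 1 / (real (bk \<gamma> k) * sqrt (real (Bk \<gamma> k))))"
  unfolding bk_def
proof (rule LeastI_ex)
  obtain c where c: "1 \<le> c" "c < Bk \<gamma> k" "distZ2 (real c *\<^sub>R \<gamma>) \<le> 1 / sqrt (real (Bk \<gamma> k))"
    using simultaneous_dirichlet[OF assms] by blast
  moreover obtain m where "distZ2 (real c *\<^sub>R \<gamma>) = mnorm (real c *\<^sub>R \<gamma> - ivec m)"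
    using distZ2_attained by blast
  ultimately have "mnorm (real c *\<^sub>R \<gamma> - ivec m) / real c \<le> (1 / sqrt (real (Bk \<gamma> k))) / real c"
    by (intro divide_right_mono) auto
  then have "mnorm (\<gamma> - ratpt m c) \<le> 1 / (real c * sqrt (real (Bk \<gamma> k)))"
    using c(1) by (simp add: mnorm_ratpt mult.commute)
  then show "\<exists>b. 1 \<le> b \<and> b < Bk \<gamma> k \<and> (\<exists>a. mnorm (\<gamma> - ratpt a b) \<le> 1 / (real b * sqrt (real (Bk \<gamma> k))))"
    using c by blast
qed

lemma bk_minimal:
  assumes "1 \<le> b" "b < bk \<gamma> k" "b < Bk \<gamma> k"
  shows "1 / (real b * sqrt (real (Bk \<gamma> k))) < mnorm (\<gamma> - ratpt a b)"
  using not_less_Least[OF assms(2)[unfolded bk_def]] assms(1,3) not_le by blast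

lemma ratpt_reduce:
  assumes "1 \<le> n" and "gcd3 a (int n) \<noteq> 1"
  shows "\<exists>n' a'. 1 \<le> n' \<and> n' < n \<and> ratpt a' n' = ratpt a n"
proof -
  define d where "d = gcd3 a (int n)"
  have "d \<noteq> 0" "0 \<le> d"
    using assms(1) by (simp_all add: d_def gcd3_def)
  with assms(2) have d2: "2 \<le> d"
    by (simp add: d_def)
  have "d dvd int n" "d dvd fst a" "d dvd snd a"
    unfolding d_def gcd3_def by (meson dvd_trans gcd_dvd1 gcd_dvd2)+
  then obtain m a1 a2 where m: "int n = d * m" and a: "fst a = d * a1" "snd a = d * a2"
    by (metis dvdE)
  have "0 < d * m"
    using m assms(1) by linarith
  then have "0 < m"
    using d2 by (simp add: zero_less_mult_iff)
  have "2 * m \<le> d * m"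
    using d2 \<open>0 < m\<close> by (intro mult_right_mono) auto
  then have "m < int n"
    using m \<open>0 < m\<close> by linarith
  have "ratpt (a1, a2) (nat m) = ratpt a n"
  proof -
    have "real n = of_int d * of_int m"
      by (metis m of_int_mult of_int_of_nat_eq)
    then show ?thesis
      using \<open>0 < m\<close> d2 by (simp add: ratpt_def a)
  qed
  then show ?thesis
    using \<open>0 < m\<close> \<open>m < int n\<close> by (intro exI[of _ "nat m"] exI[of _ "(a1, a2)"]) auto
qed

lemma Bk_numerator_coprime:
  assumes "mnorm (\<gamma> - ratpt A (Bk \<gamma> k)) < 2 powr (- real k)"
  shows "gcd3 A (int (Bk \<gamma> k)) = 1"
proof (rule ccontr)
  assume "gcd3 A (int (Bk \<gamma> k)) \<noteq> 1"
  then obtain n a where "1 \<le> n" "n < Bk \<gamma> k" "ratpt a n = ratpt A (Bk \<gamma> k)"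
    using ratpt_reduce Bk_spec by blast
  then show False
    using Bk_minimal[of n \<gamma> k a] assms by simp
qed

lemma bk_numerator_coprime:
  assumes "2 \<le> Bk \<gamma> k"
    and "mnorm (\<gamma> - ratpt a (bk \<gamma> k)) \<le> 1 / (real (bk \<gamma> k) * sqrt (real (Bk \<gamma> k)))"
  shows "gcd3 a (int (bk \<gamma> k)) = 1"
proof (rule ccontr)
  assume "gcd3 a (int (bk \<gamma> k)) \<noteq> 1"
  then obtain n a' where n: "1 \<le> n" "n < bk \<gamma> k" "ratpt a' n = ratpt a (bk \<gamma> k)"
    using ratpt_reduce bk_spec[OF assms(1)] by blast
  have "1 / (real (bk \<gamma> k) * sqrt (real (Bk \<gamma> k))) \<le> 1 / (real n * sqrt (real (Bk \<gamma> k)))"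
    using n assms(1) by (intro divide_left_mono mult_right_mono mult_pos_pos) auto
  moreover have "n < Bk \<gamma> k"
    using n(2) bk_spec[OF assms(1)] by linarith
  ultimately show False
    using bk_minimal[OF n(1,2), of a'] n(3) assms(2) by simp
qed

section \<open>Counting the residues in \<open>S_q\<close>\<close>

definition coprime_shifts :: "nat \<Rightarrow> int \<times> int \<Rightarrow> nat \<Rightarrow> (int \<times> int) set" where
  "coprime_shifts B A q = {u \<in> {0..<int q} \<times> {0..<int q}.
     gcd3 (int B * fst u + fst A, int B * snd u + snd A) (int B * int q) = 1}"

lemma sum_inverse_squares_atLeastAtMost:
  assumes "2 \<le> n"
  shows "(\<Sum>m=2..n. 1 / (real m)\<^sup>2) \<le> 3/4 - 1 / real n"
  using assms
proof (induction n rule: dec_induct)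
  case (step n)
  have "1 / (real (Suc n))\<^sup>2 \<le> 1 / (real n * real (Suc n))"
    using step by (intro divide_left_mono) (auto simp: power2_eq_square)
  also have "\<dots> = 1 / real n - 1 / real (Suc n)"
    using step by (simp add: field_simps)
  finally show ?case
    using step by (simp add: sum.cl_ivl_Suc)
qed simp

lemma sum_inverse_squares_le:
  assumes "finite M" and "\<And>m. m \<in> M \<Longrightarrow> 2 \<le> m"
  shows "(\<Sum>m\<in>M. 1 / (real m)\<^sup>2) \<le> 3/4"
proof (cases "M = {}")
  case False
  then have "2 \<le> Max M"
    using assms by (meson Max_in order.trans Max_ge)
  have "(\<Sum>m\<in>M. 1 / (real m)\<^sup>2) \<le> (\<Sum>m=2..Max M. 1 / (real m)\<^sup>2)"
    using assms by (intro sum_mono2) auto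
  also have "\<dots> \<le> 3/4 - 1 / real (Max M)"
    using \<open>2 \<le> Max M\<close> by (rule sum_inverse_squares_atLeastAtMost)
  also have "\<dots> \<le> 3/4"
    by simp
  finally show ?thesis .
qed simp

lemma card_residue_class_le:
  fixes p q B :: nat and c :: int
  assumes "prime p" "p dvd q" "\<not> p dvd B"
  shows "card {x \<in> {0..<int q}. int p dvd int B * x + c} \<le> q div p"
proof -
  let ?R = "{x \<in> {0..<int q}. int p dvd int B * x + c}"
  have p0: "0 < int p"
    using assms(1) prime_gt_0_nat by simp
  have inj: "inj_on (\<lambda>x. x div int p) ?R"
  proof (rule inj_onI)
    fix x y assume x: "x \<in> ?R" and y: "y \<in> ?R" and eq: "x div int p = y div int p"
    have "int p dvd int B * (x - y)"
      using dvd_diff[of "int p" "int B * x + c" "int B * y + c"] x y by (simp add: algebra_simps)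
    then have "int p dvd x - y"
      using assms(1,3) by (simp add: prime_dvd_mult_iff)
    then have "x mod int p = y mod int p"
      by (simp add: mod_eq_dvd_iff)
    then show "x = y"
      using eq by (metis div_mult_mod_eq)
  qed
  have "(\<lambda>x. x div int p) ` ?R \<subseteq> {0..<int (q div p)}"
  proof -
    obtain t where t: "q = p * t"
      using assms(2) by blast
    have "x div int p < int (q div p)" if "x < int q" for x
    proof -
      have "x div int p * int p \<le> x"
        using p0 by (metis div_mult_mod_eq le_add_same_cancel1 pos_mod_sign)
      then have "x div int p * int p < int t * int p"
        using that t by (simp add: mult.commute)
      then show ?thesis
        using p0 t by (simp add: mult_less_cancel_right)
    qed
    then show ?thesis
      using p0 by (auto simp: pos_imp_zdiv_nonneg_iff)
  qed
  then have "card ((\<lambda>x. x div int p) ` ?R) \<le> card {0..<int (q div p)}"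
    by (rule card_mono[rotated]) simp
  then show ?thesis
    using card_image[OF inj] by simp
qed

lemma prime_factor_of_gcd3:
  assumes B: "1 \<le> B" and q: "1 \<le> q" and A: "gcd3 A (int B) = 1"
    and ne: "gcd3 (int B * u1 + fst A, int B * u2 + snd A) (int B * int q) \<noteq> 1"
  shows "\<exists>p. prime p \<and> p dvd q \<and> \<not> p dvd B \<and>
    int p dvd int B * u1 + fst A \<and> int p dvd int B * u2 + snd A"
proof -
  let ?g = "gcd3 (int B * u1 + fst A, int B * u2 + snd A) (int B * int q)"
  have "?g \<noteq> 0" "\<not> is_unit ?g"
    using B q ne by (auto simp: gcd3_def)
  then obtain p where p: "prime p" "p dvd ?g"
    using prime_divisor_exists by blast
  then have dv: "p dvd int B * u1 + fst A" "p dvd int B * u2 + snd A" "p dvd int B * int q"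
    unfolding gcd3_def fst_conv snd_conv by (meson dvd_trans gcd_dvd1 gcd_dvd2)+
  have "\<not> p dvd int B"
  proof
    assume "p dvd int B"
    then have "p dvd gcd3 A (int B)"
      using dv by (simp add: gcd3_def dvd_add_right_iff)
    then show False
      using A p(1) by (simp add: not_prime_unit)
  qed
  moreover have "p dvd int q"
    using dv(3) p(1) calculation by (simp add: prime_dvd_mult_iff)
  moreover have "p = int (nat p)"
    using prime_gt_0_int[OF p(1)] by simp
  ultimately show ?thesis
    using p(1) dv(1,2) by (intro exI[of _ "nat p"]) (metis int_dvd_int_iff prime_nat_iff_prime)
qed

lemma card_coprime_shifts_ge:
  assumes "1 \<le> B" "1 \<le> q" "gcd3 A (int B) = 1"
  shows "(real q)\<^sup>2 / 4 \<le> real (card (coprime_shifts B A q))"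
proof -
  define T where "T = {0..<int q} \<times> {0..<int q}"
  define PR where "PR = {p. prime p \<and> p dvd q \<and> \<not> p dvd B}"
  define R where "R p c = {x \<in> {0..<int q}. int p dvd int B * x + c}" for p c
  have "PR \<subseteq> {..q}"
    using assms(2) by (auto simp: PR_def dvd_imp_le)
  then have finPR: "finite PR"
    by (rule finite_subset) simp
  have finR: "finite (R p c)" for p c
    unfolding R_def by (rule finite_subset[of _ "{0..<int q}"]) auto
  have "T - coprime_shifts B A q \<subseteq> (\<Union>p\<in>PR. R p (fst A) \<times> R p (snd A))"
  proof
    fix u assume u: "u \<in> T - coprime_shifts B A q"
    then have "gcd3 (int B * fst u + fst A, int B * snd u + snd A) (int B * int q) \<noteq> 1"
      by (auto simp: T_def coprime_shifts_def)
    then obtain p where "prime p" "p dvd q" "\<not> p dvd B"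
      "int p dvd int B * fst u + fst A" "int p dvd int B * snd u + snd A"
      using prime_factor_of_gcd3[OF assms] by blast
    then show "u \<in> (\<Union>p\<in>PR. R p (fst A) \<times> R p (snd A))"
      using u by (auto simp: PR_def R_def T_def mem_Times_iff)
  qed
  then have "card (T - coprime_shifts B A q) \<le> card (\<Union>p\<in>PR. R p (fst A) \<times> R p (snd A))"
    by (rule card_mono[rotated]) (simp add: finPR finR)
  also have "\<dots> \<le> (\<Sum>p\<in>PR. card (R p (fst A) \<times> R p (snd A)))"
    by (rule card_UN_le[OF finPR])
  also have "\<dots> \<le> (\<Sum>p\<in>PR. (q div p)\<^sup>2)"
    using card_residue_class_le
    by (intro sum_mono) (auto simp: PR_def R_def card_cartesian_product power2_eq_square intro: mult_le_mono)
  finally have "real (card (T - coprime_shifts B A q)) \<le> (\<Sum>p\<in>PR. (real (q div p))\<^sup>2)"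
    by (simp only: of_nat_power[symmetric] of_nat_sum[symmetric] of_nat_le_iff)
  also have "\<dots> = (real q)\<^sup>2 * (\<Sum>p\<in>PR. 1 / (real p)\<^sup>2)"
    by (auto simp: sum_distrib_left PR_def real_of_nat_div power_divide intro!: sum.cong)
  also have "\<dots> \<le> (real q)\<^sup>2 * (3/4)"
    using finPR by (intro mult_left_mono sum_inverse_squares_le) (auto simp: PR_def prime_ge_2_nat)
  finally have "real (card (T - coprime_shifts B A q)) \<le> (real q)\<^sup>2 * (3/4)" .
  moreover have sub: "coprime_shifts B A q \<subseteq> T" and "finite T" "card T = q * q"
    by (auto simp: coprime_shifts_def T_def card_cartesian_product)
  then have "real (card (T - coprime_shifts B A q)) = real q * real q - real (card (coprime_shifts B A q))"
    using card_Diff_subset[OF finite_subset[OF sub] sub] card_mono[OF _ sub] by (simp add: of_nat_diff)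
  ultimately show ?thesis
    by (simp add: power2_eq_square)
qed

section \<open>Lower bound for \<open>\<lambda>(E'_q)\<close>\<close>

lemma kidx_eqI:
  assumes "2 powr (- real k) < \<psi> q" "\<psi> q \<le> 2 powr (1 - real k)"
  shows "kidx \<psi> q = k"
  unfolding kidx_def
proof (rule the_equality)
  fix k' assume k': "2 powr (- real k') < \<psi> q \<and> \<psi> q \<le> 2 powr (1 - real k')"
  have "2 powr (- real k') < 2 powr (1 - real k)" "2 powr (- real k) < 2 powr (1 - real k')"
    using assms k' by linarith+
  then show "k' = k"
    by simp
qed (use assms in simp)

lemma K0_le_kidx:
  assumes "setting \<gamma> \<sigma> A a K0 \<psi>" and "2 powr (- real k) < \<psi> q"
  shows "K0 \<le> k"
proof -
  have "2 powr (- real k) < 2 powr (1 - real K0)"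
    using assms by (smt (verit) setting_def)
  then show ?thesis
    by simp
qed

lemma Sq_eq_coprime_shifts:
  assumes "2 powr (- real k) < \<psi> q" "\<psi> q \<le> 2 powr (1 - real k)"
  shows "Sq \<gamma> \<sigma> A a \<psi> q =
    (if real (Bk \<gamma> k) \<le> 2 powr (\<sigma> * real k) then coprime_shifts (Bk \<gamma> k) (A k) q
     else coprime_shifts (bk \<gamma> k) (a k) q)"
  using kidx_eqI[of k \<psi> q, OF assms] by (simp add: Sq_def coprime_shifts_def Let_def)

lemma card_Sq_ge:
  assumes S: "setting \<gamma> \<sigma> A a K0 \<psi>" and "1 \<le> q"
    and k: "2 powr (- real k) < \<psi> q" "\<psi> q \<le> 2 powr (1 - real k)"
  shows "(real q)\<^sup>2 / 4 \<le> real (card (Sq \<gamma> \<sigma> A a \<psi> q))"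
proof (cases "real (Bk \<gamma> k) \<le> 2 powr (\<sigma> * real k)")
  case True
  have "gcd3 (A k) (int (Bk \<gamma> k)) = 1"
    using S by (intro Bk_numerator_coprime) (simp add: setting_def)
  then show ?thesis
    using True card_coprime_shifts_ge Bk_spec \<open>1 \<le> q\<close>
    by (simp add: Sq_eq_coprime_shifts[where k = k and \<psi> = \<psi> and q = q, OF k])
next
  case False
  have B2: "2 \<le> Bk \<gamma> k"
    using S K0_le_kidx[OF S k(1)] by (simp add: setting_def)
  then have "gcd3 (a k) (int (bk \<gamma> k)) = 1"
    using S by (intro bk_numerator_coprime) (simp_all add: setting_def)
  then show ?thesis
    using False card_coprime_shifts_ge bk_spec[OF B2] \<open>1 \<le> q\<close>
    by (simp add: Sq_eq_coprime_shifts[where k = k and \<psi> = \<psi> and q = q, OF k])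
qed

definition approx_set :: "nat \<Rightarrow> (int \<times> int) set \<Rightarrow> real \<Rightarrow> real \<times> real \<Rightarrow> (real \<times> real) set" where
  "approx_set q S \<psi> \<gamma> = {\<alpha>. 0 \<le> fst \<alpha> \<and> fst \<alpha> \<le> 1 \<and> 0 \<le> snd \<alpha> \<and> snd \<alpha> \<le> 1 \<and>
     (\<exists>u. (fst u mod int q, snd u mod int q) \<in> S \<and> mnorm (real q *\<^sub>R \<alpha> - ivec u - \<gamma>) < \<psi>)}"

lemma Eq'_eq_approx_set: "0 < \<psi> q \<Longrightarrow> Eq' \<gamma> \<sigma> A a \<psi> q = approx_set q (Sq \<gamma> \<sigma> A a \<psi> q) (\<psi> q) \<gamma>"
  by (simp add: Eq'_def approx_set_def)

lemma approx_set_iff: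
  "\<alpha> \<in> approx_set q S \<psi> \<gamma> \<longleftrightarrow> 0 \<le> fst \<alpha> \<and> fst \<alpha> \<le> 1 \<and> 0 \<le> snd \<alpha> \<and> snd \<alpha> \<le> 1 \<and>
     (\<exists>u. (fst u mod int q, snd u mod int q) \<in> S \<and>
        \<bar>real q * fst \<alpha> - of_int (fst u) - fst \<gamma>\<bar> < \<psi> \<and> \<bar>real q * snd \<alpha> - of_int (snd u) - snd \<gamma>\<bar> < \<psi>)"
  by (simp add: approx_set_def mnorm_def ivec_def)

lemma approx_set_lmeasurable: "approx_set q S \<psi> \<gamma> \<in> lmeasurable"
proof -
  define Op where "Op = (\<Union>u\<in>{u. (fst u mod int q, snd u mod int q) \<in> S}.
    {x. mnorm (real q *\<^sub>R x - ivec u - \<gamma>) < \<psi>})"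
  have "open Op"
    unfolding Op_def by (intro open_UN ballI open_Collect_less) (auto simp: mnorm_def intro!: continuous_intros)
  moreover have "approx_set q S \<psi> \<gamma> = cbox (0, 0) (1, 1) \<inter> Op"
    by (auto simp: approx_set_def Op_def mem_box Basis_prod_def) blast+
  ultimately show ?thesis
    by (auto intro: fmeasurable_Int_fmeasurable borel_open)
qed

lemma frac_representative:
  fixes s :: int and q :: nat and c :: real
  assumes "1 \<le> q" "0 \<le> s" "s < int q"
  defines "u \<equiv> s - int q * \<lfloor>(of_int s + c) / real q\<rfloor>"
  shows "u mod int q = s" and "(of_int u + c) / real q = frac ((of_int s + c) / real q)"
proof -
  have "u mod int q = s mod int q"
    unfolding u_def by (metis mod_mult_self4 uminus_add_conv_diff mult_minus_right mult.commute add.commute)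
  then show "u mod int q = s"
    using assms by simp
  show "(of_int u + c) / real q = frac ((of_int s + c) / real q)"
    unfolding u_def frac_def using assms(1) by (simp add: field_simps)
qed

lemma approx_numerator_unique:
  assumes "mnorm (y - ivec u - \<gamma>) < \<psi>" "mnorm (y - ivec u' - \<gamma>) < \<psi>" "\<psi> \<le> 1/2"
  shows "u = u'"
proof (rule ivec_eq_if_mnorm_less_1)
  have eq: "(y - ivec u' - \<gamma>) + - (y - ivec u - \<gamma>) = ivec u - ivec u'"
    by (simp add: algebra_simps)
  have "mnorm (ivec u - ivec u') \<le> mnorm (y - ivec u' - \<gamma>) + mnorm (y - ivec u - \<gamma>)"
    using mnorm_triangle[of "y - ivec u' - \<gamma>" "- (y - ivec u - \<gamma>)"] unfolding eq mnorm_uminus .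
  then show "mnorm (ivec u - ivec u') < 1"
    using assms by linarith
qed

definition window_corner :: "real \<Rightarrow> real \<times> real \<Rightarrow> real \<times> real" where
  "window_corner w c = (if fst c \<le> 1/2 then fst c else fst c - w, if snd c \<le> 1/2 then snd c else snd c - w)"

lemma window_square_in_unit_square:
  fixes c :: "real \<times> real"
  assumes "0 \<le> fst c" "fst c < 1" "0 \<le> snd c" "snd c < 1" "0 < w" "w \<le> 1/2"
    and "x \<in> box (window_corner w c) (window_corner w c + (w, w))"
  shows "0 \<le> fst x \<and> fst x \<le> 1 \<and> 0 \<le> snd x \<and> snd x \<le> 1 \<and> mnorm (x - c) < w"
  using assms unfolding mem_square_box mnorm_less_iff window_corner_def by (auto split: if_splits)

lemma measure_approx_set_ge:
  assumes q: "1 \<le> q" and \<psi>: "0 < \<psi>" "\<psi> \<le> 1/2" and S: "S \<subseteq> {0..<int q} \<times> {0..<int q}"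
  shows "real (card S) * (\<psi> / real q)\<^sup>2 \<le> measure lebesgue (approx_set q S \<psi> \<gamma>)"
proof -
  define w where "w = \<psi> / real q"
  have "w \<le> \<psi>"
    using q \<psi> by (simp add: w_def divide_le_eq)
  then have w: "0 < w" "w \<le> 1/2"
    using q \<psi> by (simp_all add: w_def)
  define U where "U s = (fst s - int q * \<lfloor>(of_int (fst s) + fst \<gamma>) / real q\<rfloor>,
                         snd s - int q * \<lfloor>(of_int (snd s) + snd \<gamma>) / real q\<rfloor>)" for s :: "int \<times> int"
  define c where "c s = (1 / real q) *\<^sub>R (ivec (U s) + \<gamma>)" for s
  have U_mod: "(fst (U s) mod int q, snd (U s) mod int q) = s" if "s \<in> S" for s
    using that S frac_representative(1)[OF q] by (auto simp: U_def prod_eq_iff)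
  define p where "p s = window_corner w (c s)" for s
  have p: "0 \<le> fst x \<and> fst x \<le> 1 \<and> 0 \<le> snd x \<and> snd x \<le> 1 \<and> mnorm (x - c s) < w"
    if "s \<in> S" "x \<in> box (p s) (p s + (w, w))" for s x
  proof (rule window_square_in_unit_square[OF _ _ _ _ w that(2)[unfolded p_def]])
    show "0 \<le> fst (c s)" "fst (c s) < 1" "0 \<le> snd (c s)" "snd (c s) < 1"
      using that(1) S frac_representative(2)[OF q] by (auto simp: U_def c_def ivec_def frac_lt_1 add_divide_distrib)
  qed
  have scaled: "mnorm (real q *\<^sub>R x - ivec (U s) - \<gamma>) = real q * mnorm (x - c s)" for x s
  proof -
    have "real q *\<^sub>R x - ivec (U s) - \<gamma> = real q *\<^sub>R (x - c s)"
      using q by (simp add: c_def algebra_simps)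
    then show ?thesis
      by (simp add: mnorm_scaleR)
  qed
  have near: "mnorm (real q *\<^sub>R x - ivec (U s) - \<gamma>) < \<psi>" if "s \<in> S" "x \<in> box (p s) (p s + (w, w))" for s x
    using p[OF that] q by (simp add: scaled w_def less_divide_eq mult.commute)
  have "real (card S) * w\<^sup>2 \<le> measure lebesgue (approx_set q S \<psi> \<gamma>)"
  proof (rule disjoint_family_card_mult_measure_le)
    show "finite S"
      using S by (rule finite_subset) simp
    show "disjoint_family_on (\<lambda>s. box (p s) (p s + (w, w))) S"
    proof (unfold disjoint_family_on_def, intro ballI impI)
      fix s s' assume s: "s \<in> S" "s' \<in> S" "s \<noteq> s'"
      show "box (p s) (p s + (w, w)) \<inter> box (p s') (p s' + (w, w)) = {}"
      proof (rule ccontr)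
        assume "box (p s) (p s + (w, w)) \<inter> box (p s') (p s' + (w, w)) \<noteq> {}"
        then obtain x where x: "x \<in> box (p s) (p s + (w, w))" "x \<in> box (p s') (p s' + (w, w))"
          by blast
        have "U s = U s'"
          using near[OF s(1) x(1)] near[OF s(2) x(2)] \<psi>(2) by (rule approx_numerator_unique)
        then show False
          using U_mod s by metis
      qed
    qed
    show "box (p s) (p s + (w, w)) \<subseteq> approx_set q S \<psi> \<gamma>" if "s \<in> S" for s
    proof
      fix x assume "x \<in> box (p s) (p s + (w, w))"
      then show "x \<in> approx_set q S \<psi> \<gamma>"
        using p[OF that] near[OF that] U_mod[OF that] that unfolding approx_set_def
        by (intro CollectI conjI exI[of _ "U s"]) auto
    qed
    show "measure lebesgue (box (p s) (p s + (w, w))) = w\<^sup>2" for s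
      using w by (intro measure_square_box) simp
  qed (auto simp: approx_set_lmeasurable)
  then show ?thesis
    by (simp add: w_def)
qed

lemma Sq_subset: "Sq \<gamma> \<sigma> A a \<psi> q \<subseteq> {0..<int q} \<times> {0..<int q}"
  by (auto simp: Sq_def Let_def)

lemma setting_psi_bounds:
  assumes "setting \<gamma> \<sigma> A a K0 \<psi>" and "2 powr (- real k) < \<psi> q"
  shows "0 < \<psi> q" "\<psi> q \<le> 1/2"
proof -
  show "0 < \<psi> q"
    using assms(2) powr_ge_zero[of 2 "- real k"] by linarith
  show "\<psi> q \<le> 1/2"
    using assms(1) by (simp add: setting_def)
qed

lemma measure_Eq'_ge:
  assumes S: "setting \<gamma> \<sigma> A a K0 \<psi>" and q: "1 \<le> q"
    and k: "2 powr (- real k) < \<psi> q" "\<psi> q \<le> 2 powr (1 - real k)"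
  shows "(\<psi> q)\<^sup>2 / 4 \<le> measure lebesgue (Eq' \<gamma> \<sigma> A a \<psi> q)"
proof -
  have "(\<psi> q)\<^sup>2 / 4 = (real q)\<^sup>2 / 4 * (\<psi> q / real q)\<^sup>2"
    using q by (simp add: power_divide)
  also have "\<dots> \<le> real (card (Sq \<gamma> \<sigma> A a \<psi> q)) * (\<psi> q / real q)\<^sup>2"
    using card_Sq_ge[OF S q k] by (rule mult_right_mono) simp
  also have "\<dots> \<le> measure lebesgue (approx_set q (Sq \<gamma> \<sigma> A a \<psi> q) (\<psi> q) \<gamma>)"
    using setting_psi_bounds[OF S k(1)] by (intro measure_approx_set_ge q Sq_subset)
  finally show ?thesis
    using Eq'_eq_approx_set setting_psi_bounds[OF S k(1)] by simp
qed

section \<open>Upper bound for \<open>\<lambda>(E'_q \<inter> E'_r)\<close>\<close>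

lemma finite_int_interval:
  fixes a b :: real
  shows "finite {k::int. a < of_int k \<and> of_int k < b}"
  by (rule finite_subset[of _ "{\<lfloor>a\<rfloor>..\<lceil>b\<rceil>}"]) (auto simp: floor_le_iff le_ceiling_iff less_imp_le)

lemma card_int_interval_le:
  fixes a b :: real
  assumes "a \<le> b"
  shows "real (card {k::int. a < of_int k \<and> of_int k < b}) \<le> b - a + 1"
proof -
  have "{k::int. a < of_int k \<and> of_int k < b} \<subseteq> {\<lfloor>a\<rfloor> + 1 .. \<lceil>b\<rceil> - 1}"
  proof
    fix k assume "k \<in> {k::int. a < of_int k \<and> of_int k < b}"
    then have "\<lfloor>a\<rfloor> < k" "k < \<lceil>b\<rceil>"
      by (simp_all add: floor_less_iff less_ceiling_iff)
    then show "k \<in> {\<lfloor>a\<rfloor> + 1 .. \<lceil>b\<rceil> - 1}"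
      by simp
  qed
  then have "card {k::int. a < of_int k \<and> of_int k < b} \<le> card {\<lfloor>a\<rfloor> + 1 .. \<lceil>b\<rceil> - 1}"
    by (rule card_mono[rotated]) simp
  also have "\<dots> = nat (\<lceil>b\<rceil> - 1 - \<lfloor>a\<rfloor>)"
    by simp
  finally have "real (card {k::int. a < of_int k \<and> of_int k < b}) \<le> real (nat (\<lceil>b\<rceil> - 1 - \<lfloor>a\<rfloor>))"
    by simp
  also have "\<dots> \<le> b - a + 1"
  proof (cases "0 \<le> \<lceil>b\<rceil> - 1 - \<lfloor>a\<rfloor>")
    case True
    then have "real (nat (\<lceil>b\<rceil> - 1 - \<lfloor>a\<rfloor>)) = of_int \<lceil>b\<rceil> - 1 - of_int \<lfloor>a\<rfloor>"
      by simp
    then show ?thesis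
      by linarith
  qed (use assms in simp)
  finally show ?thesis .
qed

lemma card_congruent_interval_le:
  fixes m :: nat and u0 :: int and lo L :: real
  assumes m: "1 \<le> m" and L: "0 \<le> L"
  shows "real (card {u::int. lo < of_int u \<and> of_int u < lo + L \<and> int m dvd u - u0}) \<le> L / real m + 1"
proof -
  define K where "K = {k::int. (lo - of_int u0) / real m < of_int k \<and> of_int k < (lo + L - of_int u0) / real m}"
  have "{u::int. lo < of_int u \<and> of_int u < lo + L \<and> int m dvd u - u0} \<subseteq> (\<lambda>k. u0 + int m * k) ` K"
  proof
    fix u assume u: "u \<in> {u::int. lo < of_int u \<and> of_int u < lo + L \<and> int m dvd u - u0}"
    then obtain k where k: "u - u0 = int m * k"
      by (auto elim: dvdE)
    then have "of_int u = of_int u0 + real m * of_int k"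
      by (metis add.commute diff_add_cancel of_int_add of_int_mult of_int_of_nat_eq)
    then have "k \<in> K"
      using u m by (simp add: K_def field_simps)
    then show "u \<in> (\<lambda>k. u0 + int m * k) ` K"
      using k by (intro image_eqI[of _ _ k]) simp_all
  qed
  moreover have finK: "finite K"
    unfolding K_def by (rule finite_int_interval)
  ultimately have "card {u::int. lo < of_int u \<and> of_int u < lo + L \<and> int m dvd u - u0}
      \<le> card ((\<lambda>k. u0 + int m * k) ` K)"
    by (intro card_mono finite_imageI)
  also have "\<dots> \<le> card K"
    by (rule card_image_le[OF finK])
  also have "real (card K) \<le> (lo + L - of_int u0) / real m - (lo - of_int u0) / real m + 1"
    unfolding K_def using m L by (intro card_int_interval_le divide_right_mono) auto
  also have "\<dots> = L / real m + 1"
    using m by (simp add: field_simps)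
  finally show ?thesis
    by simp
qed

lemma card_residue_class_interval_le:
  fixes m :: nat and r w :: int and lo L :: real
  assumes m: "1 \<le> m" and cop: "coprime (int m) r" and L: "0 \<le> L"
  shows "real (card {u::int. lo < of_int u \<and> of_int u < lo + L \<and> int m dvd r * u - w}) \<le> L / real m + 1"
proof (cases "\<exists>u0. lo < of_int u0 \<and> of_int u0 < lo + L \<and> int m dvd r * u0 - w")
  case True
  then obtain u0 where u0: "int m dvd r * u0 - w"
    by blast
  have "int m dvd u - u0" if "int m dvd r * u - w" for u
  proof -
    have "int m dvd r * (u - u0)"
      using dvd_diff[OF that u0] by (simp add: algebra_simps)
    then show ?thesis
      using cop by (simp add: coprime_dvd_mult_right_iff)
  qed
  then have "{u::int. lo < of_int u \<and> of_int u < lo + L \<and> int m dvd r * u - w}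
      \<subseteq> {u::int. lo < of_int u \<and> of_int u < lo + L \<and> int m dvd u - u0}"
    by blast
  then have "card {u::int. lo < of_int u \<and> of_int u < lo + L \<and> int m dvd r * u - w}
      \<le> card {u::int. lo < of_int u \<and> of_int u < lo + L \<and> int m dvd u - u0}"
    by (rule card_mono[rotated]) (rule finite_subset[OF _ finite_int_interval[of lo "lo + L"]], auto)
  then show ?thesis
    using card_congruent_interval_le[OF m L, of lo u0] by linarith
next
  case False
  then have empty: "{u::int. lo < of_int u \<and> of_int u < lo + L \<and> int m dvd r * u - w} = {}"
    by blast
  have "0 \<le> L / real m"
    using L by simp
  then show ?thesis
    by (simp only: empty card.empty of_nat_0)
qed

lemma card_lattice_strip_le:
  fixes q' r' :: nat and lo L t D :: real
  assumes q': "1 \<le> q'" and cop: "coprime q' r'" and L: "0 \<le> L" and D: "0 < D"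
  defines "P \<equiv> {p::int \<times> int. lo < of_int (fst p) \<and> of_int (fst p) < lo + L \<and>
    \<bar>real r' * of_int (fst p) - real q' * of_int (snd p) - t\<bar> < D}"
  shows "finite P" and "real (card P) \<le> (2 * D + 1) * (L / real q' + 1)"
proof -
  define W where "W = {w::int. t - D < of_int w \<and> of_int w < t + D}"
  define R where "R w = {u::int. lo < of_int u \<and> of_int u < lo + L \<and> int q' dvd int r' * u - w}" for w
  define F where "F w = (\<lambda>u. (u, (int r' * u - w) div int q')) ` R w" for w
  have finW: "finite W"
    unfolding W_def by (rule finite_int_interval)
  have finR: "finite (R w)" for w
    by (rule finite_subset[OF _ finite_int_interval[of lo "lo + L"]]) (auto simp: R_def)
  have "P \<subseteq> (\<Union>w\<in>W. F w)"
  proof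
    fix p assume p: "p \<in> P"
    define w where "w = int r' * fst p - int q' * snd p"
    have "w \<in> W"
      using p by (auto simp: P_def W_def w_def abs_less_iff)
    moreover have "fst p \<in> R w" "(int r' * fst p - w) div int q' = snd p"
      using p q' by (auto simp: P_def R_def w_def)
    then have "p \<in> F w"
      unfolding F_def by (intro image_eqI[where x = "fst p"]) simp_all
    ultimately show "p \<in> (\<Union>w\<in>W. F w)"
      by blast
  qed
  moreover have finUF: "finite (\<Union>w\<in>W. F w)"
    using finW finR by (simp add: F_def)
  ultimately show "finite P"
    by (rule finite_subset)
  have "card P \<le> card (\<Union>w\<in>W. F w)"
    by (rule card_mono[OF finUF \<open>P \<subseteq> _\<close>])
  also have "\<dots> \<le> (\<Sum>w\<in>W. card (F w))"
    by (rule card_UN_le[OF finW])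
  also have "\<dots> \<le> (\<Sum>w\<in>W. card (R w))"
    unfolding F_def by (intro sum_mono card_image_le finR)
  finally have "real (card P) \<le> (\<Sum>w\<in>W. real (card (R w)))"
    by (simp only: of_nat_sum[symmetric] of_nat_le_iff)
  also have "\<dots> \<le> (\<Sum>w\<in>W. L / real q' + 1)"
    using card_residue_class_interval_le[OF q' _ L] cop unfolding R_def
    by (intro sum_mono) simp
  also have "\<dots> = real (card W) * (L / real q' + 1)"
    by simp
  also have "\<dots> \<le> (2 * D + 1) * (L / real q' + 1)"
    using card_int_interval_le[of "t - D" "t + D"] D L unfolding W_def
    by (intro mult_right_mono) auto
  finally show "real (card P) \<le> (2 * D + 1) * (L / real q' + 1)" .
qed

lemma abs_cross_combination_less:
  fixes q r :: nat and u v :: int and x c \<psi> \<psi>' :: real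
  assumes q: "1 \<le> q" and r: "1 \<le> r"
    and u: "\<bar>real q * x - of_int u - c\<bar> < \<psi>" and v: "\<bar>real r * x - of_int v - c\<bar> < \<psi>'"
  shows "\<bar>real (r div gcd q r) * of_int u - real (q div gcd q r) * of_int v
           - (real (q div gcd q r) - real (r div gcd q r)) * c\<bar>
         < max (2 * \<psi> / real q) (2 * \<psi>' / real r) * real q * real r / real (gcd q r)"
proof -
  define g where "g = real (gcd q r)"
  define q' where "q' = real (q div gcd q r)"
  define r' where "r' = real (r div gcd q r)"
  have g: "0 < g"
    using q by (simp add: g_def)
  have q': "q' = real q / g" and r': "r' = real r / g"
    by (simp_all add: q'_def r'_def g_def real_of_nat_div)
  have "r' * of_int u - q' * of_int v - (q' - r') * c
      = q' * (real r * x - of_int v - c) - r' * (real q * x - of_int u - c)"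
    using g by (simp add: q' r' field_simps)
  also have "\<bar>\<dots>\<bar> \<le> q' * \<bar>real r * x - of_int v - c\<bar> + r' * \<bar>real q * x - of_int u - c\<bar>"
    using g by (simp add: q' r' abs_triangle_ineq4[THEN order_trans] abs_mult)
  also have "\<dots> < q' * \<psi>' + r' * \<psi>"
    using g q r u v by (intro add_strict_mono mult_strict_left_mono) (auto simp: q' r')
  also have "\<dots> = real q * real r / g * (\<psi> / real q + \<psi>' / real r)"
    using q r g by (simp add: q' r' field_simps)
  also have "\<dots> \<le> real q * real r / g * max (2 * \<psi> / real q) (2 * \<psi>' / real r)"
  proof (rule mult_left_mono)
    have "2 * \<psi> / real q = 2 * (\<psi> / real q)" "2 * \<psi>' / real r = 2 * (\<psi>' / real r)"
      by simp_all
    then show "\<psi> / real q + \<psi>' / real r \<le> max (2 * \<psi> / real q) (2 * \<psi>' / real r)"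
      by linarith
  qed (use g in simp)
  also have "\<dots> = max (2 * \<psi> / real q) (2 * \<psi>' / real r) * real q * real r / g"
    by (simp add: ac_simps)
  finally show ?thesis
    by (simp only: g_def q'_def r'_def)
qed

lemma interval_intersection_bounds:
  fixes x c c' a b :: real
  assumes "\<bar>x - c\<bar> < a" "\<bar>x - c'\<bar> < b"
  shows "max (c - a) (c' - b) \<le> x \<and> x \<le> max (c - a) (c' - b) + min (2 * a) (2 * b)"
  using assms by (auto simp: abs_less_iff max_def min_def)

text \<open>Along one coordinate \<open>c\<close> of \<open>\<gamma>\<close>, the numerator pairs \<open>(u, v)\<close> that can occur at a point
  of \<open>E'_q \<inter> E'_r\<close>.\<close>

definition numerator_pairs :: "nat \<Rightarrow> nat \<Rightarrow> real \<Rightarrow> real \<Rightarrow> (int \<times> int) set" where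
  "numerator_pairs q r D c = {p. - c - 1/2 < of_int (fst p) \<and> of_int (fst p) < - c - 1/2 + (real q + 1) \<and>
     \<bar>real (r div gcd q r) * of_int (fst p) - real (q div gcd q r) * of_int (snd p)
       - (real (q div gcd q r) - real (r div gcd q r)) * c\<bar> < D}"

lemma numerator_pairs_card_le:
  fixes q r :: nat
  assumes q: "1 \<le> q" and r: "1 \<le> r" and D: "0 < D"
  shows "finite (numerator_pairs q r D c)"
    and "real (card (numerator_pairs q r D c)) \<le> (2 * D + 1) * (3 * real (gcd q r))"
proof -
  define g where "g = real (gcd q r)"
  define q' where "q' = q div gcd q r"
  have g: "1 \<le> g"
    using q by (simp add: g_def Suc_le_eq)
  have q': "1 \<le> q'" "real q' = real q / g" "coprime q' (r div gcd q r)"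
    using q r by (simp_all add: q'_def g_def real_of_nat_div div_gcd_coprime Suc_le_eq div_greater_zero_iff)
  note strip = card_lattice_strip_le[OF q'(1) q'(3) _ D, where L = "real q + 1" and lo = "- c - 1/2"
    and t = "(real (q div gcd q r) - real (r div gcd q r)) * c"]
  show "finite (numerator_pairs q r D c)"
    using strip(1) by (simp add: numerator_pairs_def q'_def)
  have "(real q + 1) / real q' = g + 1 / real q'"
    using q' g by (simp add: field_simps)
  moreover have "1 / real q' \<le> 1"
    using q'(1) by simp
  ultimately have "(real q + 1) / real q' + 1 \<le> 3 * g"
    using g by linarith
  then have "(2 * D + 1) * ((real q + 1) / real q' + 1) \<le> (2 * D + 1) * (3 * g)"
    using D by (intro mult_left_mono) auto
  moreover have "real (card (numerator_pairs q r D c)) \<le> (2 * D + 1) * ((real q + 1) / real q' + 1)"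
    using strip(2) by (simp add: numerator_pairs_def q'_def)
  ultimately show "real (card (numerator_pairs q r D c)) \<le> (2 * D + 1) * (3 * real (gcd q r))"
    by (simp add: g_def)
qed

lemma numerator_pair_window:
  fixes q r :: nat and u v :: int and y c \<psi> \<psi>' :: real
  assumes q: "1 \<le> q" and r: "1 \<le> r" and y: "0 \<le> y" "y \<le> 1" and \<psi>: "\<psi> \<le> 1/2"
    and u: "\<bar>real q * y - of_int u - c\<bar> < \<psi>" and v: "\<bar>real r * y - of_int v - c\<bar> < \<psi>'"
  defines "D \<equiv> max (2 * \<psi> / real q) (2 * \<psi>' / real r) * real q * real r / real (gcd q r)"
    and "l \<equiv> max ((of_int u + c) / real q - \<psi> / real q) ((of_int v + c) / real r - \<psi>' / real r)"
  shows "(u, v) \<in> numerator_pairs q r D c"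
    and "l \<le> y" "y \<le> l + min (2 * \<psi> / real q) (2 * \<psi>' / real r)"
proof -
  have "0 \<le> real q * y" "real q * y \<le> real q"
    using y by (simp_all add: mult_left_le)
  then have "- c - 1/2 < of_int u" "of_int u < - c - 1/2 + (real q + 1)"
    using u \<psi> by linarith+
  then show "(u, v) \<in> numerator_pairs q r D c"
    using abs_cross_combination_less[OF q r u v] by (simp add: numerator_pairs_def D_def)
  have "\<bar>y - (of_int u + c) / real q\<bar> < \<psi> / real q" "\<bar>y - (of_int v + c) / real r\<bar> < \<psi>' / real r"
    using u v q r by (simp_all add: field_simps abs_less_iff)
  from interval_intersection_bounds[OF this]
  show "l \<le> y" "y \<le> l + min (2 * \<psi> / real q) (2 * \<psi>' / real r)"
    by (simp_all add: l_def)
qed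

lemma square_count_bound:
  fixes D g \<delta> :: real
  shows "((2 * D + 1) * (3 * g)) * ((2 * D + 1) * (3 * g)) * \<delta>\<^sup>2 \<le> 72 * (\<delta>\<^sup>2 * g\<^sup>2 * (D\<^sup>2 + 1))"
proof -
  have "(2 * D + 1)\<^sup>2 \<le> 8 * (D\<^sup>2 + 1)"
    using zero_le_power2[of "2 * D - 1"] by (simp add: power2_eq_square algebra_simps)
  then have "9 * g\<^sup>2 * \<delta>\<^sup>2 * (2 * D + 1)\<^sup>2 \<le> 9 * g\<^sup>2 * \<delta>\<^sup>2 * (8 * (D\<^sup>2 + 1))"
    by (intro mult_left_mono) auto
  then show ?thesis
    by (simp add: power2_eq_square algebra_simps)
qed

lemma measure_approx_set_Int_le:
  fixes q r :: nat and S S' :: "(int \<times> int) set"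
  assumes q: "1 \<le> q" and r: "1 \<le> r" and \<psi>: "0 < \<psi>" "\<psi> \<le> 1/2" and \<psi>': "0 < \<psi>'"
  defines "g \<equiv> real (gcd q r)"
    and "\<delta> \<equiv> min (2 * \<psi> / real q) (2 * \<psi>' / real r)"
    and "D \<equiv> max (2 * \<psi> / real q) (2 * \<psi>' / real r) * real q * real r / real (gcd q r)"
  shows "measure lebesgue (approx_set q S \<psi> \<gamma> \<inter> approx_set r S' \<psi>' \<gamma>) \<le> 72 * (\<delta>\<^sup>2 * g\<^sup>2 * (D\<^sup>2 + 1))"
proof -
  have D: "0 < D"
    using q r \<psi> by (simp add: D_def less_max_iff_disj)
  have \<delta>: "0 \<le> \<delta>"
    using \<psi> \<psi>' by (simp add: \<delta>_def)
  define P where "P = numerator_pairs q r D"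
  note card_P = numerator_pairs_card_le[OF q r D, folded P_def g_def]
  define l where "l c u v = max ((of_int u + c) / real q - \<psi> / real q) ((of_int v + c) / real r - \<psi>' / real r)"
    for c u v
  define K where "K p = cbox (l (fst \<gamma>) (fst (fst p)) (snd (fst p)), l (snd \<gamma>) (fst (snd p)) (snd (snd p)))
    ((l (fst \<gamma>) (fst (fst p)) (snd (fst p)), l (snd \<gamma>) (fst (snd p)) (snd (snd p))) + (\<delta>, \<delta>))" for p
  have "approx_set q S \<psi> \<gamma> \<inter> approx_set r S' \<psi>' \<gamma> \<subseteq> (\<Union>p\<in>P (fst \<gamma>) \<times> P (snd \<gamma>). K p)"
  proof
    fix x assume "x \<in> approx_set q S \<psi> \<gamma> \<inter> approx_set r S' \<psi>' \<gamma>"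
    then obtain u v where x: "0 \<le> fst x" "fst x \<le> 1" "0 \<le> snd x" "snd x \<le> 1"
      and u: "\<bar>real q * fst x - of_int (fst u) - fst \<gamma>\<bar> < \<psi>" "\<bar>real q * snd x - of_int (snd u) - snd \<gamma>\<bar> < \<psi>"
      and v: "\<bar>real r * fst x - of_int (fst v) - fst \<gamma>\<bar> < \<psi>'" "\<bar>real r * snd x - of_int (snd v) - snd \<gamma>\<bar> < \<psi>'"
      unfolding Int_iff approx_set_iff by blast
    note w1 = numerator_pair_window[OF q r x(1,2) \<psi>(2) u(1) v(1), folded D_def \<delta>_def P_def]
    note w2 = numerator_pair_window[OF q r x(3,4) \<psi>(2) u(2) v(2), folded D_def \<delta>_def P_def]
    show "x \<in> (\<Union>p\<in>P (fst \<gamma>) \<times> P (snd \<gamma>). K p)"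
    proof (rule UN_I[of "((fst u, fst v), (snd u, snd v))"])
      show "((fst u, fst v), (snd u, snd v)) \<in> P (fst \<gamma>) \<times> P (snd \<gamma>)"
        using w1(1) w2(1) by simp
      show "x \<in> K ((fst u, fst v), (snd u, snd v))"
        unfolding K_def mem_square_cbox fst_conv snd_conv l_def using w1(2,3) w2(2,3) by simp
    qed
  qed
  then have "measure lebesgue (approx_set q S \<psi> \<gamma> \<inter> approx_set r S' \<psi>' \<gamma>)
      \<le> measure lebesgue (\<Union>p\<in>P (fst \<gamma>) \<times> P (snd \<gamma>). K p)"
    using card_P(1) approx_set_lmeasurable
    by (intro measure_mono_fmeasurable sets.Int fmeasurableD) (auto simp: K_def)
  also have "\<dots> \<le> (\<Sum>p\<in>P (fst \<gamma>) \<times> P (snd \<gamma>). measure lebesgue (K p))"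
    using card_P(1) by (intro measure_UNION_le) (auto simp: K_def)
  also have "\<dots> = real (card (P (fst \<gamma>))) * real (card (P (snd \<gamma>))) * \<delta>\<^sup>2"
  proof -
    have "measure lebesgue (K p) = \<delta>\<^sup>2" for p
      unfolding K_def using \<delta> by (rule measure_square_cbox)
    then show ?thesis
      by (simp add: card_cartesian_product)
  qed
  also have "\<dots> \<le> ((2 * D + 1) * (3 * g)) * ((2 * D + 1) * (3 * g)) * \<delta>\<^sup>2"
    using card_P(2) D by (intro mult_right_mono mult_mono) (auto simp: g_def)
  also have "\<dots> \<le> 72 * (\<delta>\<^sup>2 * g\<^sup>2 * (D\<^sup>2 + 1))"
    by (rule square_count_bound)
  finally show ?thesis .
qed

section \<open>When \<open>E'_q \<inter> E'_r\<close> is empty\<close>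

lemma approx_set_Int_witness:
  fixes q r :: nat and \<psi> \<psi>' :: real
  assumes q: "1 \<le> q" and r: "1 \<le> r" and x: "x \<in> approx_set q S \<psi> \<gamma> \<inter> approx_set r S' \<psi>' \<gamma>"
  defines "q' \<equiv> q div gcd q r" and "r' \<equiv> r div gcd q r"
    and "D \<equiv> max (2 * \<psi> / real q) (2 * \<psi>' / real r) * real q * real r / real (gcd q r)"
  obtains u v where "(fst u mod int q, snd u mod int q) \<in> S" "(fst v mod int r, snd v mod int r) \<in> S'"
    and "mnorm ((real q' - real r') *\<^sub>R \<gamma> - ivec (int r' * fst u - int q' * fst v, int r' * snd u - int q' * snd v)) < D"
proof -
  obtain u v where u: "(fst u mod int q, snd u mod int q) \<in> S"
      "\<bar>real q * fst x - of_int (fst u) - fst \<gamma>\<bar> < \<psi>" "\<bar>real q * snd x - of_int (snd u) - snd \<gamma>\<bar> < \<psi>"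
    and v: "(fst v mod int r, snd v mod int r) \<in> S'"
      "\<bar>real r * fst x - of_int (fst v) - fst \<gamma>\<bar> < \<psi>'" "\<bar>real r * snd x - of_int (snd v) - snd \<gamma>\<bar> < \<psi>'"
    using x unfolding Int_iff approx_set_iff by blast
  have "mnorm ((real q' - real r') *\<^sub>R \<gamma> - ivec (int r' * fst u - int q' * fst v, int r' * snd u - int q' * snd v)) < D"
    using abs_cross_combination_less[OF q r u(2) v(2)] abs_cross_combination_less[OF q r u(3) v(3)]
    by (simp add: mnorm_minus_ivec q'_def r'_def D_def abs_minus_commute)
  with u(1) v(1) show thesis
    by (rule that)
qed

lemma approx_set_Int_empty_if_far:
  fixes q r :: nat
  assumes "1 \<le> q" "1 \<le> r"
    and "\<not> distZ2 ((real (q div gcd q r) - real (r div gcd q r)) *\<^sub>R \<gamma>)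
            < max (2 * \<psi> / real q) (2 * \<psi>' / real r) * real q * real r / real (gcd q r)"
  shows "approx_set q S \<psi> \<gamma> \<inter> approx_set r S' \<psi>' \<gamma> = {}"
proof (rule equals0I)
  fix x assume "x \<in> approx_set q S \<psi> \<gamma> \<inter> approx_set r S' \<psi>' \<gamma>"
  then obtain w where "mnorm ((real (q div gcd q r) - real (r div gcd q r)) *\<^sub>R \<gamma> - ivec w)
      < max (2 * \<psi> / real q) (2 * \<psi>' / real r) * real q * real r / real (gcd q r)"
    by (rule approx_set_Int_witness[OF assms(1,2)])
  then show False
    using distZ2_le_mnorm assms(3) by (meson le_less_trans)
qed

lemma div_gcd_ge_2:
  fixes q r :: nat
  assumes "1 \<le> r" "r < q" "\<not> r dvd q"
  shows "2 \<le> q div gcd q r" "2 \<le> r div gcd q r"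
proof -
  define g where "g = gcd q r"
  obtain q' where q': "q = g * q'"
    using gcd_dvd1[of q r] unfolding g_def by (rule dvdE)
  obtain r' where r': "r = g * r'"
    using gcd_dvd2[of q r] unfolding g_def by (rule dvdE)
  have "0 < g"
    using assms(1) by (simp add: g_def)
  then have div: "q div g = q'" "r div g = r'"
    by (simp_all add: q' r')
  have "1 \<le> r'"
    using assms(1) r' by (cases r') auto
  moreover have "r' < q'"
    using assms(2) \<open>0 < g\<close> by (simp add: q' r')
  moreover have "r' \<noteq> 1"
    using assms(3) by (auto simp: q' r')
  ultimately show "2 \<le> q div gcd q r" "2 \<le> r div gcd q r"
    using div by (simp_all add: g_def)
qed

lemma coprime_shifts_no_common_divisor:
  assumes "m dvd n" "2 \<le> m" "(fst u mod int n, snd u mod int n) \<in> coprime_shifts B A n"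
  shows "\<not> (int m dvd int B * fst u + fst A \<and> int m dvd int B * snd u + snd A)"
proof
  assume dv: "int m dvd int B * fst u + fst A \<and> int m dvd int B * snd u + snd A"
  have mod_dvd: "int m dvd int B * (x mod int n) + c" if "int m dvd int B * x + c" for x c
  proof -
    have eq: "int B * (x mod int n) + c = (int B * x + c) - int B * int n * (x div int n)"
      by (simp add: algebra_simps minus_div_mult_eq_mod[symmetric])
    show ?thesis
      unfolding eq by (rule dvd_diff[OF that]) (use assms(1) in simp)
  qed
  have "int m dvd gcd3 (int B * (fst u mod int n) + fst A, int B * (snd u mod int n) + snd A) (int B * int n)"
    using dv assms(1) mod_dvd by (simp add: gcd3_def)
  then show False
    using assms(2,3) by (simp add: coprime_shifts_def)
qed

lemma cross_relation_dvd:
  fixes q' r' B :: nat and u v c :: int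
  assumes "coprime q' r'" "int B * (int r' * u - int q' * v) = (int q' - int r') * c"
  shows "int q' dvd int B * u + c" "int r' dvd int B * v + c"
proof -
  have eq: "int r' * (int B * u + c) = int q' * (int B * v + c)"
    using assms(2) by (simp add: algebra_simps)
  have cop: "coprime (int q') (int r')"
    using assms(1) by simp
  have "int q' dvd int r' * (int B * u + c)"
    using eq by simp
  then show "int q' dvd int B * u + c"
    using cop by (simp add: coprime_dvd_mult_right_iff)
  have "int r' dvd int q' * (int B * v + c)"
    using eq[symmetric] by simp
  then show "int r' dvd int B * v + c"
    using cop by (simp add: coprime_dvd_mult_right_iff coprime_commute)
qed

lemma approx_set_Int_empty_if_exact:
  fixes q r B :: nat and A' :: "int \<times> int" and \<psi> \<psi>' :: real
  assumes q: "1 \<le> q" and r: "1 \<le> r" and "r < q" "\<not> r dvd q"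
  defines "q' \<equiv> q div gcd q r" and "r' \<equiv> r div gcd q r"
    and "D \<equiv> max (2 * \<psi> / real q) (2 * \<psi>' / real r) * real q * real r / real (gcd q r)"
  assumes exact: "\<And>w. mnorm ((real q' - real r') *\<^sub>R \<gamma> - ivec w) < D \<Longrightarrow>
      int B * fst w = (int q' - int r') * fst A' \<and> int B * snd w = (int q' - int r') * snd A'"
    and S: "S = coprime_shifts B A' q \<or> S' = coprime_shifts B A' r"
  shows "approx_set q S \<psi> \<gamma> \<inter> approx_set r S' \<psi>' \<gamma> = {}"
proof (rule equals0I)
  fix x assume "x \<in> approx_set q S \<psi> \<gamma> \<inter> approx_set r S' \<psi>' \<gamma>"
  then obtain u v where u: "(fst u mod int q, snd u mod int q) \<in> S" and v: "(fst v mod int r, snd v mod int r) \<in> S'"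
    and w: "mnorm ((real q' - real r') *\<^sub>R \<gamma> - ivec (int r' * fst u - int q' * fst v, int r' * snd u - int q' * snd v)) < D"
    using approx_set_Int_witness[OF q r] unfolding q'_def r'_def D_def by blast
  have cop: "coprime q' r'"
    using q by (simp add: q'_def r'_def div_gcd_coprime)
  have rel: "int B * (int r' * fst u - int q' * fst v) = (int q' - int r') * fst A'"
    "int B * (int r' * snd u - int q' * snd v) = (int q' - int r') * snd A'"
    using exact[OF w] by simp_all
  note dvd1 = cross_relation_dvd[OF cop rel(1)] and dvd2 = cross_relation_dvd[OF cop rel(2)]
  have two: "2 \<le> q'" "2 \<le> r'" "q' dvd q" "r' dvd r"
    using div_gcd_ge_2[OF r assms(3,4)] unfolding q'_def r'_def
    by (auto intro: dvd_div_mult_self[THEN subst] dvd_triv_left)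
  from S show False
  proof
    assume "S = coprime_shifts B A' q"
    then show False
      using coprime_shifts_no_common_divisor[OF two(3,1), of u B A'] u dvd1(1) dvd2(1) by simp
  next
    assume "S' = coprime_shifts B A' r"
    then show False
      using coprime_shifts_no_common_divisor[OF two(4,2), of v B A'] v dvd1(2) dvd2(2) by simp
  qed
qed

lemma int_relation_if_close:
  fixes B :: nat and w c hi :: int and x D E :: real
  assumes B: "1 \<le> B" and hi: "0 \<le> hi" and w: "\<bar>of_int w - of_int hi * x\<bar> < D"
    and c: "of_int hi * \<bar>real B * x - of_int c\<bar> \<le> E" and small: "real B * D + E \<le> 1"
  shows "int B * w = hi * c"
proof -
  have "of_int (int B * w - hi * c) = real B * (of_int w - of_int hi * x) + of_int hi * (real B * x - of_int c)"
    by (simp add: algebra_simps)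
  moreover have "\<bar>real B * (of_int w - of_int hi * x) + of_int hi * (real B * x - of_int c)\<bar>
      \<le> real B * \<bar>of_int w - of_int hi * x\<bar> + of_int hi * \<bar>real B * x - of_int c\<bar>"
    using hi by (simp add: abs_triangle_ineq[THEN order_trans] abs_mult)
  moreover have "real B * \<bar>of_int w - of_int hi * x\<bar> < real B * D"
    using B w by (intro mult_strict_left_mono) auto
  ultimately have "\<bar>of_int (int B * w - hi * c) - of_int 0\<bar> < (1::real)"
    using c small by linarith
  then have "int B * w - hi * c = 0"
    by (rule int_eq_if_abs_diff_less_1)
  then show ?thesis
    by simp
qed

lemma exact_relation_if_Bk_close:
  fixes B :: nat and A' w :: "int \<times> int" and hi :: int and D :: real
  assumes B: "1 \<le> B" and hi: "0 \<le> hi"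
    and small: "2 * max D (of_int hi * mnorm (\<gamma> - ratpt A' B)) < 1 / real B"
    and w: "mnorm (of_int hi *\<^sub>R \<gamma> - ivec w) < D"
  shows "int B * fst w = hi * fst A' \<and> int B * snd w = hi * snd A'"
proof -
  define E where "E = real B * (of_int hi * mnorm (\<gamma> - ratpt A' B))"
  have "real B * (2 * max D (of_int hi * mnorm (\<gamma> - ratpt A' B))) < 1"
    using small B by (simp add: field_simps)
  moreover have "D + of_int hi * mnorm (\<gamma> - ratpt A' B) \<le> 2 * max D (of_int hi * mnorm (\<gamma> - ratpt A' B))"
    by (simp add: max_def)
  then have "real B * (D + of_int hi * mnorm (\<gamma> - ratpt A' B))
      \<le> real B * (2 * max D (of_int hi * mnorm (\<gamma> - ratpt A' B)))"
    by (rule mult_left_mono) simp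
  ultimately have BDE: "real B * D + E \<le> 1"
    by (simp add: E_def algebra_simps)
  have coord: "of_int hi * \<bar>real B * x - of_int c\<bar> \<le> E"
    if "\<bar>real B * x - of_int c\<bar> \<le> mnorm (real B *\<^sub>R \<gamma> - ivec A')" for x c
    using that hi B by (simp add: E_def mnorm_ratpt mult_left_mono)
  have "\<bar>of_int (fst w) - of_int hi * fst \<gamma>\<bar> < D" "\<bar>of_int (snd w) - of_int hi * snd \<gamma>\<bar> < D"
    using w by (simp_all add: mnorm_minus_ivec abs_minus_commute)
  moreover have "of_int hi * \<bar>real B * fst \<gamma> - of_int (fst A')\<bar> \<le> E"
    "of_int hi * \<bar>real B * snd \<gamma> - of_int (snd A')\<bar> \<le> E"
    by (intro coord; simp add: mnorm_minus_ivec)+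
  ultimately show ?thesis
    using int_relation_if_close[OF B hi _ _ BDE] by blast
qed

lemma exact_relation_if_bk_close:
  fixes b B :: nat and a' w :: "int \<times> int" and hi :: int and D :: real
  assumes b: "1 \<le> b" and B: "4 < real B" and hi: "0 \<le> hi"
    and a': "mnorm (\<gamma> - ratpt a' b) \<le> 1 / (real b * sqrt (real B))"
    and small: "2 * D < 1 / real b" and h: "of_int hi * distZ2 (real b *\<^sub>R \<gamma>) \<le> 1/2"
    and w: "mnorm (of_int hi *\<^sub>R \<gamma> - ivec w) < D"
  shows "int b * fst w = hi * fst a' \<and> int b * snd w = hi * snd a'"
proof -
  have "2 < sqrt (real B)"
    using B by (intro real_less_rsqrt) simp
  then have "1 / sqrt (real B) < 1/2"
    by (simp add: divide_less_eq)
  moreover have "mnorm (real b *\<^sub>R \<gamma> - ivec a') \<le> 1 / sqrt (real B)"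
    using a' b by (simp add: mnorm_ratpt field_simps)
  ultimately have "mnorm (real b *\<^sub>R \<gamma> - ivec a') < 1/2"
    by linarith
  then have "distZ2 (real b *\<^sub>R \<gamma>) = mnorm (real b *\<^sub>R \<gamma> - ivec a')"
    by (rule distZ2_eq_mnorm)
  then have coord: "of_int hi * \<bar>real b * x - of_int c\<bar> \<le> 1/2"
    if "\<bar>real b * x - of_int c\<bar> \<le> mnorm (real b *\<^sub>R \<gamma> - ivec a')" for x c
  proof -
    have "of_int hi * \<bar>real b * x - of_int c\<bar> \<le> of_int hi * distZ2 (real b *\<^sub>R \<gamma>)"
      using that hi \<open>distZ2 _ = _\<close> by (intro mult_left_mono) simp_all
    then show ?thesis
      using h by linarith
  qed
  have "real b * D + 1/2 \<le> 1"
    using small b by (simp add: field_simps)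
  moreover have "\<bar>of_int (fst w) - of_int hi * fst \<gamma>\<bar> < D" "\<bar>of_int (snd w) - of_int hi * snd \<gamma>\<bar> < D"
    using w by (simp_all add: mnorm_minus_ivec abs_minus_commute)
  moreover have "of_int hi * \<bar>real b * fst \<gamma> - of_int (fst a')\<bar> \<le> 1/2"
    "of_int hi * \<bar>real b * snd \<gamma> - of_int (snd a')\<bar> \<le> 1/2"
    by (intro coord; simp add: mnorm_minus_ivec)+
  ultimately show ?thesis
    using int_relation_if_close[OF b hi] by blast
qed

lemma Sq_at_index:
  assumes k: "2 powr (- real k) < \<psi> q" "\<psi> q \<le> 2 powr (1 - real k)"
    and l: "2 powr (- real l) < \<psi> r" "\<psi> r \<le> 2 powr (1 - real l)"
  defines "j \<equiv> if \<psi> q / real q > \<psi> r / real r then k else l"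
  shows "Sq \<gamma> \<sigma> A a \<psi> q = (if real (Bk \<gamma> j) \<le> 2 powr (\<sigma> * real j) then coprime_shifts (Bk \<gamma> j) (A j) q
                            else coprime_shifts (bk \<gamma> j) (a j) q) \<or>
         Sq \<gamma> \<sigma> A a \<psi> r = (if real (Bk \<gamma> j) \<le> 2 powr (\<sigma> * real j) then coprime_shifts (Bk \<gamma> j) (A j) r
                            else coprime_shifts (bk \<gamma> j) (a j) r)"
  using Sq_eq_coprime_shifts[where k = k and \<psi> = \<psi> and q = q, OF k]
    Sq_eq_coprime_shifts[where k = l and \<psi> = \<psi> and q = r, OF l]
  by (simp add: j_def)

lemma four_less_two_pow_index_mult_D:
  fixes q r :: nat
  assumes r: "1 \<le> r" "r < q" "\<not> r dvd q"
    and k: "2 powr (- real k) < \<psi> q" and l: "2 powr (- real l) < \<psi> r"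
  defines "D \<equiv> max (2 * \<psi> q / real q) (2 * \<psi> r / real r) * real q * real r / real (gcd q r)"
    and "j \<equiv> if \<psi> q / real q > \<psi> r / real r then k else l"
  shows "4 < 2 ^ j * D"
proof -
  have g: "0 < real (gcd q r)"
    using r by simp
  have q': "real (q div gcd q r) = real q / real (gcd q r)"
    and r': "real (r div gcd q r) = real r / real (gcd q r)"
    by (simp_all add: real_of_nat_div)
  have "2 \<le> q div gcd q r" "2 \<le> r div gcd q r"
    using div_gcd_ge_2[OF r] by simp_all
  then have q'2: "2 \<le> real (q div gcd q r)" and r'2: "2 \<le> real (r div gcd q r)"
    by simp_all
  show ?thesis
  proof (cases "\<psi> q / real q > \<psi> r / real r")
    case True
    then have "D = 2 * \<psi> q * real (r div gcd q r)"
      using r g by (simp add: D_def r' max_def field_simps)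
    moreover have "1 < 2 ^ k * \<psi> q"
      using k by (simp add: two_powr_minus field_simps)
    moreover have "1 * 2 < (2 ^ k * \<psi> q) * real (r div gcd q r)"
      using \<open>1 < 2 ^ k * \<psi> q\<close> r'2 by (intro mult_less_le_imp_less) auto
    ultimately show ?thesis
      using True by (simp add: j_def algebra_simps)
  next
    case False
    then have "D = 2 * \<psi> r * real (q div gcd q r)"
      using r g by (simp add: D_def q' max_def field_simps)
    moreover have "1 < 2 ^ l * \<psi> r"
      using l by (simp add: two_powr_minus field_simps)
    moreover have "1 * 2 < (2 ^ l * \<psi> r) * real (q div gcd q r)"
      using \<open>1 < 2 ^ l * \<psi> r\<close> q'2 by (intro mult_less_le_imp_less) auto
    ultimately show ?thesis
      using False by (simp add: j_def algebra_simps)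
  qed
qed

lemma measure_Eq'_Int_le:
  assumes S: "setting \<gamma> \<sigma> A a K0 \<psi>" and r: "1 \<le> r" "r < q"
    and k: "2 powr (- real k) < \<psi> q" and l: "2 powr (- real l) < \<psi> r"
  shows "measure lebesgue (Eq' \<gamma> \<sigma> A a \<psi> q \<inter> Eq' \<gamma> \<sigma> A a \<psi> r)
    \<le> 72 * ((min (2 * \<psi> q / real q) (2 * \<psi> r / real r))\<^sup>2 * (real (gcd q r))\<^sup>2 *
        ((max (2 * \<psi> q / real q) (2 * \<psi> r / real r) * real q * real r / real (gcd q r))\<^sup>2 + 1))"
  using measure_approx_set_Int_le[of q r "\<psi> q" "\<psi> r"] setting_psi_bounds[OF S k] setting_psi_bounds[OF S l] r
  by (simp add: Eq'_eq_approx_set)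

lemma square_term_le_measure_product:
  assumes S: "setting \<gamma> \<sigma> A a K0 \<psi>" and r: "1 \<le> r" "r < q"
    and k: "2 powr (- real k) < \<psi> q" "\<psi> q \<le> 2 powr (1 - real k)"
    and l: "2 powr (- real l) < \<psi> r" "\<psi> r \<le> 2 powr (1 - real l)"
  defines "D \<equiv> max (2 * \<psi> q / real q) (2 * \<psi> r / real r) * real q * real r / real (gcd q r)"
    and "P \<equiv> measure lebesgue (Eq' \<gamma> \<sigma> A a \<psi> q) * measure lebesgue (Eq' \<gamma> \<sigma> A a \<psi> r)"
  shows "(min (2 * \<psi> q / real q) (2 * \<psi> r / real r))\<^sup>2 * (real (gcd q r))\<^sup>2 * (D\<^sup>2 + 1) \<le> 256 * (P + P / D\<^sup>2)"
proof -
  have q: "1 \<le> q"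
    using r by simp
  have \<psi>: "0 < \<psi> q" "0 < \<psi> r"
    using setting_psi_bounds[OF S k(1)] setting_psi_bounds[OF S l(1)] by simp_all
  have g: "0 < real (gcd q r)"
    using q by simp
  have D: "0 < D"
    using \<psi> q r g by (simp add: D_def less_max_iff_disj)
  have "min (2 * \<psi> q / real q) (2 * \<psi> r / real r) * max (2 * \<psi> q / real q) (2 * \<psi> r / real r)
      = (2 * \<psi> q / real q) * (2 * \<psi> r / real r)"
    by (simp add: min_def max_def ac_simps)
  then have key: "min (2 * \<psi> q / real q) (2 * \<psi> r / real r) * real (gcd q r) * D = 4 * \<psi> q * \<psi> r"
    using q r g by (simp add: D_def field_simps)
  have "(min (2 * \<psi> q / real q) (2 * \<psi> r / real r))\<^sup>2 * (real (gcd q r))\<^sup>2 * (D\<^sup>2 + 1)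
      = (min (2 * \<psi> q / real q) (2 * \<psi> r / real r) * real (gcd q r) * D)\<^sup>2 * (1 + 1 / D\<^sup>2)"
    using D by (simp add: field_simps power2_eq_square)
  also have "\<dots> = 16 * ((\<psi> q)\<^sup>2 * (\<psi> r)\<^sup>2) * (1 + 1 / D\<^sup>2)"
    by (simp only: key) (simp add: power2_eq_square)
  also have "\<dots> \<le> 256 * P * (1 + 1 / D\<^sup>2)"
  proof (rule mult_right_mono)
    have "(\<psi> q)\<^sup>2 / 4 * ((\<psi> r)\<^sup>2 / 4) \<le> P"
      unfolding P_def using measure_Eq'_ge[OF S q k] measure_Eq'_ge[OF S r(1) l]
      by (intro mult_mono) auto
    then show "16 * ((\<psi> q)\<^sup>2 * (\<psi> r)\<^sup>2) \<le> 256 * P"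
      by simp
  qed simp
  finally show ?thesis
    by (simp add: algebra_simps)
qed

lemma Eq'_Int_empty_if_far:
  assumes S: "setting \<gamma> \<sigma> A a K0 \<psi>" and r: "1 \<le> r" "r < q"
    and k: "2 powr (- real k) < \<psi> q" and l: "2 powr (- real l) < \<psi> r"
    and far: "\<not> distZ2 ((real (q div gcd q r) - real (r div gcd q r)) *\<^sub>R \<gamma>)
            < max (2 * \<psi> q / real q) (2 * \<psi> r / real r) * real q * real r / real (gcd q r)"
  shows "Eq' \<gamma> \<sigma> A a \<psi> q \<inter> Eq' \<gamma> \<sigma> A a \<psi> r = {}"
  using approx_set_Int_empty_if_far[OF _ r(1) far] setting_psi_bounds[OF S k] setting_psi_bounds[OF S l] r
  by (simp add: Eq'_eq_approx_set)

lemma Eq'_Int_empty_Bk_case: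
  assumes S: "setting \<gamma> \<sigma> A a K0 \<psi>" and r: "1 \<le> r" "r < q" "\<not> r dvd q"
    and k: "2 powr (- real k) < \<psi> q" "\<psi> q \<le> 2 powr (1 - real k)"
    and l: "2 powr (- real l) < \<psi> r" "\<psi> r \<le> 2 powr (1 - real l)"
  defines "D \<equiv> max (2 * \<psi> q / real q) (2 * \<psi> r / real r) * real q * real r / real (gcd q r)"
    and "h \<equiv> real (q div gcd q r) - real (r div gcd q r)"
    and "j \<equiv> if \<psi> q / real q > \<psi> r / real r then k else l"
  assumes B: "real (Bk \<gamma> j) \<le> 2 powr (\<sigma> * real j)"
    and small: "2 * max D (h * mnorm (\<gamma> - ratpt (A j) (Bk \<gamma> j))) < 1 / real (Bk \<gamma> j)"
  shows "Eq' \<gamma> \<sigma> A a \<psi> q \<inter> Eq' \<gamma> \<sigma> A a \<psi> r = {}"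
proof -
  let ?hi = "int (q div gcd q r) - int (r div gcd q r)"
  have hi: "h = of_int ?hi" "0 \<le> ?hi"
    using r(2) by (simp_all add: h_def div_le_mono)
  have "approx_set q (Sq \<gamma> \<sigma> A a \<psi> q) (\<psi> q) \<gamma> \<inter> approx_set r (Sq \<gamma> \<sigma> A a \<psi> r) (\<psi> r) \<gamma> = {}"
  proof (rule approx_set_Int_empty_if_exact[where B = "Bk \<gamma> j" and A' = "A j"])
    show "int (Bk \<gamma> j) * fst w = ?hi * fst (A j) \<and> int (Bk \<gamma> j) * snd w = ?hi * snd (A j)"
      if "mnorm ((real (q div gcd q r) - real (r div gcd q r)) *\<^sub>R \<gamma> - ivec w)
        < max (2 * \<psi> q / real q) (2 * \<psi> r / real r) * real q * real r / real (gcd q r)" for w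
      using exact_relation_if_Bk_close[OF conjunct1[OF Bk_spec] hi(2)] small that
      by (simp add: hi(1) D_def)
    show "Sq \<gamma> \<sigma> A a \<psi> q = coprime_shifts (Bk \<gamma> j) (A j) q \<or>
        Sq \<gamma> \<sigma> A a \<psi> r = coprime_shifts (Bk \<gamma> j) (A j) r"
      using Sq_at_index[OF k l, of \<gamma> \<sigma> A a] B by (simp add: j_def)
  qed (use r in auto)
  then show ?thesis
    using setting_psi_bounds[OF S k(1)] setting_psi_bounds[OF S l(1)] by (simp add: Eq'_eq_approx_set)
qed

lemma Eq'_Int_empty_bk_case:
  assumes S: "setting \<gamma> \<sigma> A a K0 \<psi>" and r: "1 \<le> r" "r < q" "\<not> r dvd q"
    and k: "2 powr (- real k) < \<psi> q" "\<psi> q \<le> 2 powr (1 - real k)"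
    and l: "2 powr (- real l) < \<psi> r" "\<psi> r \<le> 2 powr (1 - real l)"
  defines "D \<equiv> max (2 * \<psi> q / real q) (2 * \<psi> r / real r) * real q * real r / real (gcd q r)"
    and "h \<equiv> real (q div gcd q r) - real (r div gcd q r)"
    and "j \<equiv> if \<psi> q / real q > \<psi> r / real r then k else l"
  assumes B: "max (2 ^ j * D) (2 powr (\<sigma> * real j)) < real (Bk \<gamma> j)"
    and small: "2 * D < 1 / real (bk \<gamma> j)" and h: "h * distZ2 (real (bk \<gamma> j) *\<^sub>R \<gamma>) \<le> 1/2"
  shows "Eq' \<gamma> \<sigma> A a \<psi> q \<inter> Eq' \<gamma> \<sigma> A a \<psi> r = {}"
proof -
  let ?hi = "int (q div gcd q r) - int (r div gcd q r)"
  have hi: "h = of_int ?hi" "0 \<le> ?hi"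
    using r(2) by (simp_all add: h_def div_le_mono)
  have B4: "4 < real (Bk \<gamma> j)"
    using four_less_two_pow_index_mult_D[OF r k(1) l(1)] B by (simp add: D_def j_def)
  then have B2: "2 \<le> Bk \<gamma> j"
    by simp
  have a: "mnorm (\<gamma> - ratpt (a j) (bk \<gamma> j)) \<le> 1 / (real (bk \<gamma> j) * sqrt (real (Bk \<gamma> j)))"
    using S B2 by (simp add: setting_def)
  have "approx_set q (Sq \<gamma> \<sigma> A a \<psi> q) (\<psi> q) \<gamma> \<inter> approx_set r (Sq \<gamma> \<sigma> A a \<psi> r) (\<psi> r) \<gamma> = {}"
  proof (rule approx_set_Int_empty_if_exact[where B = "bk \<gamma> j" and A' = "a j"])
    show "int (bk \<gamma> j) * fst w = ?hi * fst (a j) \<and> int (bk \<gamma> j) * snd w = ?hi * snd (a j)"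
      if "mnorm ((real (q div gcd q r) - real (r div gcd q r)) *\<^sub>R \<gamma> - ivec w)
        < max (2 * \<psi> q / real q) (2 * \<psi> r / real r) * real q * real r / real (gcd q r)" for w
    proof (rule exact_relation_if_bk_close[OF conjunct1[OF bk_spec[OF B2]] B4 hi(2) a small])
      show "of_int ?hi * distZ2 (real (bk \<gamma> j) *\<^sub>R \<gamma>) \<le> 1/2"
        using h by (simp add: hi(1))
      show "mnorm (of_int ?hi *\<^sub>R \<gamma> - ivec w) < D"
        using that by (simp add: D_def)
    qed
    show "Sq \<gamma> \<sigma> A a \<psi> q = coprime_shifts (bk \<gamma> j) (a j) q \<or>
        Sq \<gamma> \<sigma> A a \<psi> r = coprime_shifts (bk \<gamma> j) (a j) r"
      using Sq_at_index[OF k l, of \<gamma> \<sigma> A a] B by (simp add: j_def)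
  qed (use r in auto)
  then show ?thesis
    using setting_psi_bounds[OF S k(1)] setting_psi_bounds[OF S l(1)] by (simp add: Eq'_eq_approx_set)
qed

lemma combine_upper_lower_bounds:
  fixes lam T P D :: real
  assumes "0 \<le> lam" "lam \<le> 72 * T" "T \<le> 256 * (P + P / D\<^sup>2)" "0 \<le> P"
  shows "lam \<le> 72 * 256 * T" "T \<le> 72 * 256 * (P + P / D\<^sup>2)" "lam \<le> 72 * 256 * (P + P / D\<^sup>2)"
proof -
  have "0 \<le> P / D\<^sup>2"
    using assms(4) by simp
  then show "lam \<le> 72 * 256 * T" "T \<le> 72 * 256 * (P + P / D\<^sup>2)" "lam \<le> 72 * 256 * (P + P / D\<^sup>2)"
    using assms by linarith+
qed

lemma bound_with_indicators:
  fixes lam C P D :: real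
  assumes "lam \<le> C * (P + P / D\<^sup>2)" "0 \<le> P" "0 \<le> C"
    and "\<not> N \<Longrightarrow> lam = 0" and "N \<Longrightarrow> \<not> ((a \<and> b) \<or> c) \<Longrightarrow> lam = 0"
  shows "lam \<le> C * (P + P / D\<^sup>2 * of_bool N * (of_bool a * of_bool b + of_bool c))"
proof (cases "N \<and> ((a \<and> b) \<or> c)")
  case True
  then have "1 \<le> of_bool N * (of_bool a * of_bool b + of_bool c :: real)"
    by auto
  then have "P / D\<^sup>2 * 1 \<le> P / D\<^sup>2 * (of_bool N * (of_bool a * of_bool b + of_bool c))"
    using assms(2) by (intro mult_left_mono) auto
  then have "C * (P + P / D\<^sup>2) \<le> C * (P + P / D\<^sup>2 * of_bool N * (of_bool a * of_bool b + of_bool c))"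
    using assms(3) by (intro mult_left_mono) (auto simp: mult.assoc)
  then show ?thesis
    using assms(1) by linarith
next
  case False
  then have "lam = 0"
    using assms(4,5) by blast
  then show ?thesis
    using assms(2,3) by simp
qed

theorem lemma4p1:
  shows "\<exists>C>0. \<forall>(\<gamma>::real \<times> real) (\<sigma>::real) (A::nat \<Rightarrow> int \<times> int) (a::nat \<Rightarrow> int \<times> int)
      (K0::nat) (\<psi>::nat \<Rightarrow> real) (q::nat) (r::nat) (Q::real) (R::real) (k::nat) (l::nat).
    setting \<gamma> \<sigma> A a K0 \<psi> \<and>
    0 < Q \<and> 0 < R \<and> Q < real q \<and> real q \<le> 2 * Q \<and> R < real r \<and> real r \<le> 2 * R \<and> r < q \<and>
    2 powr (- real k) < \<psi> q \<and> \<psi> q \<le> 2 powr (1 - real k) \<and>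
    2 powr (- real l) < \<psi> r \<and> \<psi> r \<le> 2 powr (1 - real l)
    \<longrightarrow>
    (let Eq = Eq' \<gamma> \<sigma> A a \<psi> q; Er = Eq' \<gamma> \<sigma> A a \<psi> r;
         g = real (gcd q r);
         \<Delta> = max (2 * \<psi> q / real q) (2 * \<psi> r / real r);
         \<delta> = min (2 * \<psi> q / real q) (2 * \<psi> r / real r);
         D = \<Delta> * real q * real r / g;
         h = real (q div gcd q r) - real (r div gcd q r);
         j = (if \<psi> q / real q > \<psi> r / real r then k else l);
         Bj = real (Bk \<gamma> j); bj = real (bk \<gamma> j);
         Dh = max D (h * mnorm (\<gamma> - ratpt (A j) (Bk \<gamma> j)));
         lam = measure lebesgue (Eq \<inter> Er);
         P = measure lebesgue Eq * measure lebesgue Er;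
         near = of_bool (distZ2 (h *\<^sub>R \<gamma>) < D)
     in
       (lam \<le> C * (\<delta>\<^sup>2 * g\<^sup>2 * (D\<^sup>2 + 1)) \<and>
        \<delta>\<^sup>2 * g\<^sup>2 * (D\<^sup>2 + 1) \<le> C * (P + P / D\<^sup>2)) \<and>
       (\<not> r dvd q \<and> Bj \<le> max (2 ^ j * D) (2 powr (\<sigma> * real j)) \<longrightarrow>
          lam \<le> C * (P + P / D\<^sup>2 * near *
            (of_bool (2 * Dh \<ge> 1 / Bj) * of_bool (Bj \<le> 2 powr (\<sigma> * real j))
             + of_bool (2 powr (\<sigma> * real j) < Bj)))) \<and>
       (\<not> r dvd q \<and> Bj > max (2 ^ j * D) (2 powr (\<sigma> * real j)) \<longrightarrow>
          lam \<le> C * (P + P / D\<^sup>2 * near *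
            (of_bool (2 * D \<ge> 1 / bj) * of_bool (h * distZ2 (bj *\<^sub>R \<gamma>) \<le> 1/2)
             + of_bool (h * distZ2 (bj *\<^sub>R \<gamma>) > 1/2)))))"
proof (intro exI[of _ "72 * 256"] conjI allI impI, goal_cases)
  case (2 \<gamma> \<sigma> A a K0 \<psi> q r Q R k l)
  \<comment> \<open>The dyadic ranges \<open>Q, R\<close> are only needed to get \<open>r \<ge> 1\<close>.\<close>
  then have S: "setting \<gamma> \<sigma> A a K0 \<psi>" and r: "1 \<le> r" "r < q"
    and k: "2 powr (- real k) < \<psi> q" "\<psi> q \<le> 2 powr (1 - real k)"
    and l: "2 powr (- real l) < \<psi> r" "\<psi> r \<le> 2 powr (1 - real l)"
    by (auto simp: Suc_le_eq)
  note bounds = combine_upper_lower_bounds[OF measure_nonneg measure_Eq'_Int_le[OF S r k(1) l(1)]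
    square_term_le_measure_product[OF S r k l] mult_nonneg_nonneg[OF measure_nonneg measure_nonneg]]
  note far = Eq'_Int_empty_if_far[OF S r k(1) l(1)]
  show ?case
    unfolding Let_def
  proof (intro conjI impI, goal_cases)
    case 1
    show ?case by (rule bounds(1))
  next
    case 2
    show ?case by (rule bounds(2))
  next
    case 3
    \<comment> \<open>Part (2) holds without its hypothesis on \<open>B_\<bullet>\<close>.\<close>
    note Bk_case = Eq'_Int_empty_Bk_case[OF S r conjunct1[OF 3] k l]
    show ?case
      by (rule bound_with_indicators[OF bounds(3)]) (auto simp: far Bk_case not_le not_less)
  next
    case 4
    note bk_case = Eq'_Int_empty_bk_case[OF S r conjunct1[OF 4] k l conjunct2[OF 4]]
    show ?case
      by (rule bound_with_indicators[OF bounds(3)]) (auto simp: far bk_case not_le not_less)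
  qed
qed simp

end
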